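(* Let $M\ge1$ and let $\mathbf u$ be the unit lift. Then: (i) $\hat\Phi_{\mathbf u}$ is increasing and maps $(q_G,q_T]\cap\mathcal V$ bijectively onto $\mathcal V^*$; (ii) $\hat\Phi_{\mathbf u}(q_{KL})=q_{KL}^*$; (iii) $\hat\Phi_{\mathbf u}(I_{n+1}\cap\mathcal V)=I_n^*\cap\mathcal V^*$ for all $n\ge0$.
   Context: Sequences and quasi-greedy expansions. $\Omega_M=\{0,\dots,M\}^{\mathbb N}$, with lexicographic order $\prec$ and left shift $\sigma$. For $q\in(1,M+1]$, $\alpha(q)$ is the lexicographically largest $(a_i)\in\Omega_M$ not ending in $0^\infty$ with $\sum a_iq^{-i}=1$. $\alpha^*$ denotes this map for $M=1$. Word operations. For a word $c_1\dots c_k$: - $c_1\dots c_k^\pm=c_1\dots c_{k-1}(c_k\pm1)$; - $\overline{c_1\dots c_k}=(M-c_1)\dots(M-c_k)$, and $\overline{(c_i)}=(M-c_i)$. The set $\mathcal V$. $\mathbf V=\{(c_i):\overline{(c_i)}\preceq\sigma^n((c_i))\preceq(c_i)\ \forall n\ge0\}$ and $\mathcal V=\{q\in(1,M+1]:\alpha(q)\in\mathbf V\}$. Starred objects ($\mathcal V^*$, $q^*_{KL}$, $I_n^*$) denote the corresponding objects for $M=1$. The unit lift. $\mathbf u=k$ if $M=2k$, and $\mathbf u=(k+1)k$ if $M=2k+1$. Special bases. - $q_G$ is given by $\alpha(q_G)=\mathbf u^\infty$. - Let $\tau_i$ ($i\ge0$) be the parity of the binary digit sum of $i$. Put $\lambda_i=k+\tau_i-\tau_{i-1}$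 if $M=2k$, and $\lambda_i=k+\tau_i$ if $M=2k+1$. Then $\alpha(q_{KL})=(\lambda_i)_{i\ge1}$. - For $n\ge1$, $\alpha(q_n')=\lambda_1\dots\lambda_N(\overline{\lambda_1\dots\lambda_N}^+)^\infty$, where $N=2^{n-1}$ if $M$ is even and $N=2^n$ if $M$ is odd. - $q_T=q_1'$, $q_0'=M+1$, and $I_n=(q_{n+1}',q_n']$. These satisfy $q_G<q_{KL}<q_{n+1}'<q_n'\le q_T$, and $\alpha(q_T)=\mathbf u^+(\overline{\mathbf u})^\infty$. The graph. Let $G$ have vertices Start, $A$, $B$ and edges - $e_0$: Start$\to A$, - $e_1$: $A\to B$, - $e_2$: $B\to B$, - $e_3$: $B\to A$, - $e_4$: $A\to A$. It carries two labelings: - $\mathcal L_{\mathbf u}$: $e_0,e_3\mapsto\mathbf u^+$; $e_1\mapsto\overline{\mathbf u^+}$; $e_2\mapsto\mathbf u$; $e_4\mapsto\overline{\mathbf u}$; - $\mathcal L^*$: $e_0,e_3,e_4\mapsto1$; $e_1,e_2\mapsto0$. $X_{\mathbf u}$ is the set of label concatenations along infinite paths starting with $e_0$. The maps. $\Phi_{\mathbf u}:X_{\mathbf u}\to\{x\in\{0,1\}^{\mathbb N}:x_1=1\}$ replaces each $\mathcal L_{\mathbf u}$-label on the path by its $\mathcal L^*$-label. For $q\in(q_G,q_T]\cap\mathcal V$ one has $\alpha(q)\in X_{\mathbf u}$, and $\hat\Phi_{\mathbf u}(q):=(\alpha^* )^{-1}(\Phi_{\mathbf u}(\alpha(q)))$.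 *)

theory Defs
  imports Complex_Main
begin

text \<open>Sequences (a_i)_{i>=1} are represented as functions nat => nat, with
  index j standing for a_(j+1). Words are lists of digits.\<close>

definition lex_less :: "(nat \<Rightarrow> nat) \<Rightarrow> (nat \<Rightarrow> nat) \<Rightarrow> bool" where
  "lex_less a b \<longleftrightarrow> (\<exists>n. (\<forall>i<n. a i = b i) \<and> a n < b n)"

definition lex_le :: "(nat \<Rightarrow> nat) \<Rightarrow> (nat \<Rightarrow> nat) \<Rightarrow> bool" where
  "lex_le a b \<longleftrightarrow> a = b \<or> lex_less a b"

definition shift :: "nat \<Rightarrow> (nat \<Rightarrow> nat) \<Rightarrow> nat \<Rightarrow> nat" where
  "shift n a = (\<lambda>i. a (n + i))"

definition Omega :: "nat \<Rightarrow> (nat \<Rightarrow> nat) set" where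
  "Omega M = {a. \<forall>i. a i \<le> M}"

definition QG_cand :: "nat \<Rightarrow> real \<Rightarrow> (nat \<Rightarrow> nat) set" where
  "QG_cand M q = {a \<in> Omega M. (\<forall>N. \<exists>i\<ge>N. a i \<noteq> 0) \<and>
      (\<Sum>i. real (a i) / q ^ Suc i) = 1}"

definition alpha :: "nat \<Rightarrow> real \<Rightarrow> nat \<Rightarrow> nat" where
  "alpha M q = (THE a. a \<in> QG_cand M q \<and> (\<forall>b\<in>QG_cand M q. lex_le b a))"

definition seq_conj :: "nat \<Rightarrow> (nat \<Rightarrow> nat) \<Rightarrow> nat \<Rightarrow> nat" where
  "seq_conj M c = (\<lambda>i. M - c i)"

definition Vseq :: "nat \<Rightarrow> (nat \<Rightarrow> nat) set" where
  "Vseq M = {c. \<forall>n. lex_le (seq_conj M c) (shift n c) \<and> lex_le (shift n c) c}"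

definition Vset :: "nat \<Rightarrow> real set" where
  "Vset M = {q. 1 < q \<and> q \<le> real M + 1 \<and> alpha M q \<in> Vseq M}"

definition word_plus :: "nat list \<Rightarrow> nat list" where
  "word_plus w = butlast w @ [last w + 1]"

definition word_conj :: "nat \<Rightarrow> nat list \<Rightarrow> nat list" where
  "word_conj M w = map (\<lambda>c. M - c) w"

definition cyc :: "nat list \<Rightarrow> nat \<Rightarrow> nat" where
  "cyc w = (\<lambda>i. w ! (i mod length w))"

definition seq_app :: "nat list \<Rightarrow> (nat \<Rightarrow> nat) \<Rightarrow> nat \<Rightarrow> nat" where
  "seq_app p s = (\<lambda>i. if i < length p then p ! i else s (i - length p))"

definition unit_lift :: "nat \<Rightarrow> nat list" where
  "unit_lift M = (if even M then [M div 2] else [M div 2 + 1, M div 2])"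

definition wstart :: "(nat \<Rightarrow> nat list) \<Rightarrow> nat \<Rightarrow> nat" where
  "wstart w k = (\<Sum>j<k. length (w j))"

definition word_concat :: "(nat \<Rightarrow> nat list) \<Rightarrow> nat \<Rightarrow> nat" where
  "word_concat w i = (let k = (LEAST k. i < wstart w (Suc k)) in w k ! (i - wstart w k))"

datatype vertex = Start | VA | VB
datatype edge = E0 | E1 | E2 | E3 | E4

fun esrc :: "edge \<Rightarrow> vertex" where
  "esrc E0 = Start" | "esrc E1 = VA" | "esrc E2 = VB" | "esrc E3 = VB" | "esrc E4 = VA"

fun etgt :: "edge \<Rightarrow> vertex" where
  "etgt E0 = VA" | "etgt E1 = VB" | "etgt E2 = VB" | "etgt E3 = VA" | "etgt E4 = VA"

definition is_path :: "(nat \<Rightarrow> edge) \<Rightarrow> bool" where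
  "is_path p \<longleftrightarrow> p 0 = E0 \<and> (\<forall>i. etgt (p i) = esrc (p (Suc i)))"

fun Lu :: "nat \<Rightarrow> edge \<Rightarrow> nat list" where
  "Lu M E0 = word_plus (unit_lift M)"
| "Lu M E3 = word_plus (unit_lift M)"
| "Lu M E1 = word_conj M (word_plus (unit_lift M))"
| "Lu M E2 = unit_lift M"
| "Lu M E4 = word_conj M (unit_lift M)"

fun Lstar :: "edge \<Rightarrow> nat list" where
  "Lstar E0 = [1]" | "Lstar E3 = [1]" | "Lstar E4 = [1]"
| "Lstar E1 = [0]" | "Lstar E2 = [0]"

definition Xu :: "nat \<Rightarrow> (nat \<Rightarrow> nat) set" where
  "Xu M = {word_concat (\<lambda>i. Lu M (p i)) | p. is_path p}"

definition Phi_u :: "nat \<Rightarrow> (nat \<Rightarrow> nat) \<Rightarrow> nat \<Rightarrow> nat" where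
  "Phi_u M x = (let p = (SOME p. is_path p \<and> word_concat (\<lambda>i. Lu M (p i)) = x)
                in word_concat (\<lambda>i. Lstar (p i)))"

definition Phi_hat :: "nat \<Rightarrow> real \<Rightarrow> real" where
  "Phi_hat M q = (THE p. 1 < p \<and> p \<le> 2 \<and> alpha 1 p = Phi_u M (alpha M q))"

definition qG :: "nat \<Rightarrow> real" where
  "qG M = (THE q. 1 < q \<and> q \<le> real M + 1 \<and> alpha M q = cyc (unit_lift M))"

fun bitsum :: "nat \<Rightarrow> nat" where
  "bitsum n = (if n = 0 then 0 else n mod 2 + bitsum (n div 2))"

definition tau :: "nat \<Rightarrow> int" where
  "tau i = int (bitsum i mod 2)"

text \<open>lambda_i for i >= 1.\<close>
definition lam :: "nat \<Rightarrow> nat \<Rightarrow> nat" where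
  "lam M i = (if even M then nat (int (M div 2) + tau i - tau (i - 1))
              else nat (int (M div 2) + tau i))"

definition qKL :: "nat \<Rightarrow> real" where
  "qKL M = (THE q. 1 < q \<and> q \<le> real M + 1 \<and> alpha M q = (\<lambda>j. lam M (Suc j)))"

definition Nlen :: "nat \<Rightarrow> nat \<Rightarrow> nat" where
  "Nlen M n = (if even M then 2 ^ (n - 1) else 2 ^ n)"

definition qprime :: "nat \<Rightarrow> nat \<Rightarrow> real" where
  "qprime M n = (if n = 0 then real M + 1 else
     (let w = map (lam M) [1..<Nlen M n + 1] in
      THE q. 1 < q \<and> q \<le> real M + 1 \<and>
        alpha M q = seq_app w (cyc (word_plus (word_conj M w)))))"

definition qT :: "nat \<Rightarrow> real" where
  "qT M = qprime M 1"

definition Iint :: "nat \<Rightarrow> nat \<Rightarrow> real set" where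
  "Iint M n = {qprime M (Suc n)<..qprime M n}"

end

theory Submission
  imports Defs
begin

(*
  For q in (1, M+1] the map q |-> alpha(q) is strictly increasing for the lexicographic order,
  and by Parry's criterion every sequence that is not eventually 0 and dominates all its shifts
  is some alpha(q); so bases can be compared through their quasi-greedy expansions.

  Along a path of G the L_u-label of an edge depends only on its own L*-label and on that of the
  preceding edge. The resulting block substitution x |-> lift x is inverted by Phi_u; it is
  strictly increasing and commutes with reflection and with shifts by whole blocks, so lift x
  is a V-sequence exactly when x is a V*-sequence. Conversely, a V-sequence c with
  alpha(q_G) = lift 0^oo < c <= lift 1^oo = alpha(q_T) can be decoded block by block: a wrong
  digit at the start of a block would move the shift of c to the beginning of the preceding run
  of equal bits outside the range between the reflection of c and c. Hence Phi_hat is lift^-1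
  transported along alpha and alpha*, an increasing bijection onto V*. Finally lift sends the
  Thue-Morse sequence alpha*(q*_KL) to alpha(q_KL) and alpha*(q*'_n) to alpha(q'_(n+1)), which
  gives (ii) and, by monotonicity, (iii).
*)

section \<open>Lexicographic order and the set of V-sequences\<close>

lemma lex_less_irrefl: "\<not> lex_less a a"
  by (auto simp: lex_less_def)

lemma lex_lessI: "(\<And>i. i < n \<Longrightarrow> a i = b i) \<Longrightarrow> a n < b n \<Longrightarrow> lex_less a b"
  unfolding lex_less_def by blast

lemma lex_less_trans:
  assumes "lex_less a b" "lex_less b c"
  shows "lex_less a c"
proof -
  obtain n where n: "\<forall>i<n. a i = b i" "a n < b n"
    using assms(1) by (auto simp: lex_less_def)
  obtain m where m: "\<forall>i<m. b i = c i" "b m < c m"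
    using assms(2) by (auto simp: lex_less_def)
  show ?thesis
  proof (cases "n \<le> m")
    case True
    then show ?thesis
      using n m by (intro lex_lessI[of n]) (auto simp: le_less)
  next
    case False
    then show ?thesis
      using n m by (intro lex_lessI[of m]) auto
  qed
qed

lemma lex_less_asym: "lex_less a b \<Longrightarrow> \<not> lex_less b a"
  using lex_less_trans lex_less_irrefl by blast

lemma lex_less_linear:
  assumes "a \<noteq> b"
  shows "lex_less a b \<or> lex_less b a"
proof -
  obtain j where "a j \<noteq> b j"
    using assms by auto
  define n where "n = (LEAST j. a j \<noteq> b j)"
  have "a n \<noteq> b n"
    unfolding n_def by (rule LeastI) fact
  moreover have "\<forall>i<n. a i = b i"
    unfolding n_def using not_less_Least by blast
  ultimately show ?thesis
    unfolding lex_less_def by (metis linorder_neqE_nat)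
qed

lemma lex_le_iff_not_less: "lex_le a b \<longleftrightarrow> \<not> lex_less b a"
  unfolding lex_le_def using lex_less_linear lex_less_asym lex_less_irrefl by blast

lemma lex_le_refl [simp]: "lex_le a a"
  by (simp add: lex_le_def)

lemma lex_less_imp_le: "lex_less a b \<Longrightarrow> lex_le a b"
  by (simp add: lex_le_def)

lemma lex_le_trans: "lex_le a b \<Longrightarrow> lex_le b c \<Longrightarrow> lex_le a c"
  unfolding lex_le_def using lex_less_trans by blast

lemma lex_le_less_trans: "lex_le a b \<Longrightarrow> lex_less b c \<Longrightarrow> lex_less a c"
  unfolding lex_le_def using lex_less_trans by blast

lemma lex_less_le_trans: "lex_less a b \<Longrightarrow> lex_le b c \<Longrightarrow> lex_less a c"
  unfolding lex_le_def using lex_less_trans by blast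

lemma lex_le_antisym: "lex_le a b \<Longrightarrow> lex_le b a \<Longrightarrow> a = b"
  unfolding lex_le_def using lex_less_asym by blast

lemma lex_less_hd: "a 0 < b 0 \<Longrightarrow> lex_less a b"
  by (rule lex_lessI[of 0]) auto

lemma lex_le_imp_hd_le: "lex_le a b \<Longrightarrow> a 0 \<le> b 0"
  unfolding lex_le_def lex_less_def by (auto simp: less_imp_le_nat dest: spec[of _ 0])

lemma shift_apply [simp]: "shift n a i = a (n + i)"
  by (simp add: shift_def)

lemma shift_0 [simp]: "shift 0 a = a"
  by (simp add: shift_def)

lemma shift_shift [simp]: "shift m (shift n a) = shift (n + m) a"
  by (simp add: shift_def add.assoc)

lemma seq_conj_apply [simp]: "seq_conj M a i = M - a i"
  by (simp add: seq_conj_def)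

lemma Omega_le: "a \<in> Omega M \<Longrightarrow> a i \<le> M"
  by (simp add: Omega_def)

lemma Omega_shift: "a \<in> Omega M \<Longrightarrow> shift n a \<in> Omega M"
  by (simp add: Omega_def)

lemma Omega_1_cases: "a \<in> Omega 1 \<Longrightarrow> a i = 0 \<or> a i = 1"
  using Omega_le[of a 1 i] by linarith

lemma lex_less_conj:
  assumes "lex_less a b" "b \<in> Omega M"
  shows "lex_less (seq_conj M b) (seq_conj M a)"
proof -
  obtain n where n: "\<forall>i<n. a i = b i" "a n < b n"
    using assms(1) by (auto simp: lex_less_def)
  have "b n \<le> M"
    using assms(2) by (rule Omega_le)
  then show ?thesis
    using n by (intro lex_lessI[of n]) auto
qed

lemma lex_le_conj: "lex_le a b \<Longrightarrow> b \<in> Omega M \<Longrightarrow> lex_le (seq_conj M b) (seq_conj M a)"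
  unfolding lex_le_def using lex_less_conj by blast

lemma lex_le_shift_common_prefix:
  assumes "lex_le a b" "\<forall>i<d. a i = b i"
  shows "lex_le (shift d a) (shift d b)"
proof (cases "a = b")
  case False
  then obtain p where p: "\<forall>i<p. a i = b i" "a p < b p"
    using assms(1) by (auto simp: lex_le_def lex_less_def)
  have "d \<le> p"
    using p(2) assms(2) by (metis less_irrefl not_less)
  then have "lex_less (shift d a) (shift d b)"
    using p by (intro lex_lessI[of "p - d"]) auto
  then show ?thesis
    by (rule lex_less_imp_le)
qed simp

lemma lex_le_zero_prefix:
  assumes "lex_le a z" "\<forall>i<d. z i = 0"
  shows "\<forall>i<d. a i = 0"
proof (rule ccontr)
  assume "\<not> ?thesis"
  then obtain j where j: "j < d" "a j \<noteq> 0"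
    by auto
  define p where "p = (LEAST i. a i \<noteq> 0)"
  have "a p \<noteq> 0" "p \<le> j" "\<forall>i<p. a i = 0"
    unfolding p_def using j(2) by (auto intro: LeastI Least_le dest: not_less_Least)
  then have "lex_less z a"
    using assms(2) j(1) by (intro lex_lessI[of p]) auto
  then show False
    using assms(1) by (simp add: lex_le_iff_not_less)
qed

lemma Omega_1_lex_le_ones: "a \<in> Omega 1 \<Longrightarrow> lex_le a (\<lambda>_. 1)"
  by (auto simp: lex_le_iff_not_less lex_less_def Omega_def not_less)

lemma Vseq_D:
  assumes "c \<in> Vseq M"
  shows "lex_le (seq_conj M c) (shift n c)" "lex_le (shift n c) c"
  using assms by (auto simp: Vseq_def)

lemma Vseq_digit_bounds:
  assumes "c \<in> Vseq M"
  shows "M - c 0 \<le> c n" "c n \<le> c 0"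
  using lex_le_imp_hd_le[OF Vseq_D(1)[OF assms, of n]] lex_le_imp_hd_le[OF Vseq_D(2)[OF assms, of n]]
  by simp_all

lemma Vseq_closed:
  assumes "\<forall>m. \<exists>y\<in>Vseq M. \<forall>i<m. y i = x i"
  shows "x \<in> Vseq M"
  unfolding Vseq_def mem_Collect_eq
proof (intro allI conjI)
  fix n
  show "lex_le (seq_conj M x) (shift n x)"
  proof (rule ccontr)
    assume "\<not> ?thesis"
    then obtain p where p: "\<forall>i<p. x (n + i) = M - x i" "x (n + p) < M - x p"
      by (auto simp: lex_le_iff_not_less lex_less_def)
    obtain y where y: "y \<in> Vseq M" "\<forall>i<n + p + 1. y i = x i"
      using assms by blast
    have "lex_less (shift n y) (seq_conj M y)"
      using p y(2) by (intro lex_lessI[of p]) auto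
    then show False
      using Vseq_D(1)[OF y(1), of n] by (simp add: lex_le_iff_not_less)
  qed
  show "lex_le (shift n x) x"
  proof (rule ccontr)
    assume "\<not> ?thesis"
    then obtain p where p: "\<forall>i<p. x i = x (n + i)" "x p < x (n + p)"
      by (auto simp: lex_le_iff_not_less lex_less_def)
    obtain y where y: "y \<in> Vseq M" "\<forall>i<n + p + 1. y i = x i"
      using assms by blast
    have "lex_less y (shift n y)"
      using p y(2) by (intro lex_lessI[of p]) auto
    then show False
      using Vseq_D(2)[OF y(1), of n] by (simp add: lex_le_iff_not_less)
  qed
qed

lemma Vseq_nonterminating:
  assumes "M \<ge> 1" "c \<in> Vseq M" "c i \<noteq> 0"
  shows "\<forall>N. \<exists>i\<ge>N. c i \<noteq> 0"
proof (rule ccontr)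
  assume "\<not> ?thesis"
  then obtain N where N: "\<forall>i\<ge>N. c i = 0"
    by auto
  then have "shift N c = (\<lambda>_. 0)"
    by (auto simp: fun_eq_iff)
  then have "lex_le (seq_conj M c) (\<lambda>_. 0)"
    using Vseq_D(1)[OF assms(2), of N] by simp
  then have "seq_conj M c = (\<lambda>_. 0)"
    unfolding lex_le_def lex_less_def by auto
  then have "M - c N = 0"
    by (metis seq_conj_apply)
  then show False
    using N assms(1) by simp
qed

section \<open>Quasi-greedy expansions\<close>

definition seq_val :: "real \<Rightarrow> (nat \<Rightarrow> nat) \<Rightarrow> real" where
  "seq_val q a = (\<Sum>i. real (a i) / q ^ Suc i)"

lemma QG_cand_iff:
  "a \<in> QG_cand M q \<longleftrightarrow> a \<in> Omega M \<and> (\<forall>N. \<exists>i\<ge>N. a i \<noteq> 0) \<and> seq_val q a = 1"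
  by (simp add: QG_cand_def seq_val_def)

lemma seq_val_term_le:
  assumes "1 < q" "a \<in> Omega M"
  shows "real (a n) / q ^ Suc n \<le> real M * (1/q) * (1/q) ^ n"
proof -
  have "real (a n) / q ^ Suc n \<le> real M / q ^ Suc n"
    using assms Omega_le[of a M n] by (intro divide_right_mono) auto
  then show ?thesis
    by (simp add: power_one_over)
qed

lemma summable_seq_val:
  assumes "1 < q" "a \<in> Omega M"
  shows "summable (\<lambda>i. real (a i) / q ^ Suc i)"
proof (rule summable_comparison_test'[where N = 0])
  show "summable (\<lambda>n. real M * (1/q) * (1/q) ^ n)"
    using assms(1) by (intro summable_mult summable_geometric) auto
  show "norm (real (a n) / q ^ Suc n) \<le> real M * (1/q) * (1/q) ^ n" for n
    using seq_val_term_le[OF assms] assms(1) by simp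
qed

lemma seq_val_nonneg: "1 < q \<Longrightarrow> a \<in> Omega M \<Longrightarrow> 0 \<le> seq_val q a"
  unfolding seq_val_def by (rule suminf_nonneg[OF summable_seq_val]) auto

lemma seq_val_le:
  assumes "1 < q" "a \<in> Omega M"
  shows "seq_val q a \<le> real M / (q - 1)"
proof -
  have "seq_val q a \<le> (\<Sum>n. real M * (1/q) * (1/q) ^ n)"
    unfolding seq_val_def using assms
    by (intro suminf_le summable_seq_val seq_val_term_le summable_mult summable_geometric) auto
  also have "\<dots> = real M * (1/q) * (1 / (1 - 1/q))"
    using assms by (subst suminf_mult) (auto simp: suminf_geometric)
  also have "\<dots> = real M / (q - 1)"
    using assms by (simp add: field_simps)
  finally show ?thesis .
qed

lemma seq_val_split:
  assumes "1 < q" "a \<in> Omega M"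
  shows "seq_val q a = (\<Sum>i<n. real (a i) / q ^ Suc i) + seq_val q (shift n a) / q ^ n"
proof -
  have "(\<Sum>i. real (a (i + n)) / q ^ Suc (i + n)) = (\<Sum>i. real (shift n a i) / q ^ Suc i / q ^ n)"
    by (simp add: add.commute power_add field_simps)
  also have "\<dots> = seq_val q (shift n a) / q ^ n"
    unfolding seq_val_def by (rule suminf_divide[OF summable_seq_val[OF assms(1) Omega_shift[OF assms(2)]]])
  finally show ?thesis
    unfolding seq_val_def using suminf_split_initial_segment[OF summable_seq_val[OF assms], of n] by simp
qed

lemma seq_val_split_Suc:
  assumes "1 < q" "a \<in> Omega M"
  shows "seq_val q a = (\<Sum>i<n. real (a i) / q ^ Suc i)
    + (real (a n) + seq_val q (shift (Suc n) a)) / q ^ Suc n"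
  using seq_val_split[OF assms, of "Suc n"] by (simp add: add_divide_distrib)

lemma seq_val_pos:
  assumes "1 < q" "a \<in> Omega M" "a i \<noteq> 0"
  shows "0 < seq_val q a"
  unfolding seq_val_def using assms by (intro suminf_pos2[OF summable_seq_val[OF assms(1,2)], of i]) auto

lemma seq_val_shift_pos:
  assumes "1 < q" "a \<in> Omega M" "\<forall>N. \<exists>i\<ge>N. a i \<noteq> 0"
  shows "0 < seq_val q (shift n a)"
proof -
  obtain i where "i \<ge> n" "a i \<noteq> 0"
    using assms(3) by blast
  then have "shift n a (i - n) \<noteq> 0"
    by simp
  then show ?thesis
    using seq_val_pos[OF assms(1) Omega_shift[OF assms(2)]] by blast
qed

lemma seq_val_strict_antimono:
  assumes "1 < q" "q < r" "a \<in> Omega M" "a i \<noteq> 0"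
  shows "seq_val r a < seq_val q a"
proof -
  have "0 < (\<Sum>n. real (a n) / q ^ Suc n - real (a n) / r ^ Suc n)"
  proof (rule suminf_pos2[of _ i])
    show "summable (\<lambda>n. real (a n) / q ^ Suc n - real (a n) / r ^ Suc n)"
      using assms by (intro summable_diff summable_seq_val[of _ _ M]) auto
    show "0 \<le> real (a n) / q ^ Suc n - real (a n) / r ^ Suc n" for n
      using assms power_mono[of q r "Suc n"] by (auto intro!: divide_left_mono)
    show "0 < real (a i) / q ^ Suc i - real (a i) / r ^ Suc i"
      using assms power_strict_mono[of q r "Suc i"] by (auto intro!: divide_strict_left_mono)
  qed
  also have "\<dots> = seq_val q a - seq_val r a"
    unfolding seq_val_def using assms by (intro suminf_diff[symmetric] summable_seq_val[of _ _ M]) auto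
  finally show ?thesis
    by simp
qed

lemma continuous_on_seq_val:
  assumes "1 < a" "c \<in> Omega M"
  shows "continuous_on {a..b} (\<lambda>q. seq_val q c)"
proof -
  have summable: "summable (\<lambda>n. real (c n) * y ^ n)" if "\<bar>y\<bar> < 1" for y :: real
  proof (rule summable_comparison_test'[where N = 0])
    show "summable (\<lambda>n. real M * \<bar>y\<bar> ^ n)"
      using that by (intro summable_mult summable_geometric) auto
    show "norm (real (c n) * y ^ n) \<le> real M * \<bar>y\<bar> ^ n" for n
      using Omega_le[OF assms(2), of n] by (simp add: abs_mult power_abs mult_right_mono)
  qed
  have "isCont (\<lambda>q. (1/q) * (\<Sum>n. real (c n) * (1/q) ^ n)) x" if "a \<le> x" for x
  proof -
    define K where "K = (1 + 1/x) / 2"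
    have K: "1/x < K" "K < 1" "0 < K"
      using that assms(1) by (auto simp: K_def field_simps)
    have "isCont (\<lambda>y. \<Sum>n. real (c n) * y ^ n) (1/x)"
      using K that assms(1) by (intro isCont_powser[of _ K] summable) auto
    then show ?thesis
      using that assms(1) isCont_o2[where f = "\<lambda>q. 1/q" and a = x and g = "\<lambda>y. \<Sum>n. real (c n) * y ^ n"]
      by (auto intro!: continuous_intros)
  qed
  then have "continuous_on {a..b} (\<lambda>q. (1/q) * (\<Sum>n. real (c n) * (1/q) ^ n))"
    by (intro continuous_at_imp_continuous_on) auto
  moreover have "seq_val q c = (1/q) * (\<Sum>n. real (c n) * (1/q) ^ n)" if "q \<in> {a..b}" for q
  proof -
    have "seq_val q c = (\<Sum>n. (1/q) * (real (c n) * (1/q) ^ n))"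
      unfolding seq_val_def by (simp add: power_one_over)
    also have "\<dots> = (1/q) * (\<Sum>n. real (c n) * (1/q) ^ n)"
      using that assms(1) by (intro suminf_mult summable) auto
    finally show ?thesis .
  qed
  ultimately show ?thesis
    using continuous_on_cong[of "{a..b}" "{a..b}"] by (metis (no_types, lifting))
qed

text \<open>The quasi-greedy algorithm: \<open>qg_rem q n\<close> is the remainder after \<open>n\<close> digits, and each digit
  is the largest one leaving a positive remainder.\<close>

fun qg_rem :: "real \<Rightarrow> nat \<Rightarrow> real" where
  "qg_rem q 0 = 1"
| "qg_rem q (Suc n) = q * qg_rem q n - real (nat \<lceil>q * qg_rem q n\<rceil> - 1)"

definition qg_digit :: "real \<Rightarrow> nat \<Rightarrow> nat" where
  "qg_digit q n = nat \<lceil>q * qg_rem q n\<rceil> - 1"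

lemma real_nat_ceiling_minus_1:
  assumes "0 < t"
  shows "real (nat \<lceil>t\<rceil> - 1) = of_int \<lceil>t\<rceil> - 1"
proof -
  have "1 \<le> \<lceil>t\<rceil>"
    using assms by (simp add: order.strict_implies_order)
  then have "int (nat \<lceil>t\<rceil> - 1) = \<lceil>t\<rceil> - 1"
    by linarith
  then show ?thesis
    by (metis of_int_1 of_int_diff of_int_of_nat_eq)
qed

lemma qg_rem_bounds:
  assumes "1 < q"
  shows "0 < qg_rem q n \<and> qg_rem q n \<le> 1"
proof (induction n)
  case (Suc n)
  let ?t = "q * qg_rem q n"
  have "0 < ?t"
    using Suc assms by simp
  moreover have "of_int \<lceil>?t\<rceil> - 1 < ?t" "?t \<le> of_int \<lceil>?t\<rceil>"
    by linarith+
  ultimately show ?case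
    using real_nat_ceiling_minus_1[of ?t] by simp
qed simp

lemma qg_digit_props:
  assumes "1 < q" "q \<le> real M + 1"
  shows "qg_digit q n \<le> M" "qg_rem q (Suc n) = q * qg_rem q n - real (qg_digit q n)"
proof -
  let ?t = "q * qg_rem q n"
  have "0 < ?t" "?t \<le> real M + 1"
    using qg_rem_bounds[OF assms(1), of n] assms
    by (auto intro: order.trans[OF mult_left_le[of "qg_rem q n" q]])
  then have "\<lceil>?t\<rceil> \<le> int M + 1"
    by (simp add: ceiling_le_iff)
  then show "qg_digit q n \<le> M"
    unfolding qg_digit_def by linarith
  show "qg_rem q (Suc n) = q * qg_rem q n - real (qg_digit q n)"
    by (simp add: qg_digit_def)
qed

lemma qg_digit_Omega: "1 < q \<Longrightarrow> q \<le> real M + 1 \<Longrightarrow> qg_digit q \<in> Omega M"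
  using qg_digit_props(1) by (auto simp: Omega_def)

lemma qg_partial_sum:
  assumes "1 < q" "q \<le> real M + 1"
  shows "(\<Sum>i<n. real (qg_digit q i) / q ^ Suc i) + qg_rem q n / q ^ n = 1"
proof (induction n)
  case (Suc n)
  have "qg_rem q (Suc n) / q ^ Suc n = qg_rem q n / q ^ n - real (qg_digit q n) / q ^ Suc n"
    using qg_digit_props(2)[OF assms, of n] assms by (simp add: field_simps)
  then show ?case
    using Suc by simp
qed simp

lemma seq_val_qg_digit:
  assumes "1 < q" "q \<le> real M + 1"
  shows "seq_val q (qg_digit q) = 1" "seq_val q (shift n (qg_digit q)) = qg_rem q n"
proof -
  have "(\<lambda>n. qg_rem q n / q ^ n) \<longlonglongrightarrow> 0"
  proof (rule real_tendsto_sandwich[where f = "\<lambda>_. 0" and h = "\<lambda>n. (1/q) ^ n"])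
    show "\<forall>\<^sub>F n in sequentially. qg_rem q n / q ^ n \<le> (1/q) ^ n"
      using qg_rem_bounds[OF assms(1)] assms by (auto simp: power_one_over divide_right_mono)
    show "\<forall>\<^sub>F n in sequentially. 0 \<le> qg_rem q n / q ^ n"
      using qg_rem_bounds[OF assms(1)] assms by (simp add: less_imp_le)
    show "(\<lambda>n. (1/q) ^ n) \<longlonglongrightarrow> 0"
      using assms by (intro LIMSEQ_power_zero) auto
  qed auto
  then have "(\<lambda>n. 1 - qg_rem q n / q ^ n) \<longlonglongrightarrow> 1"
    by (auto intro: tendsto_eq_intros)
  moreover have "(\<lambda>n. 1 - qg_rem q n / q ^ n) = (\<lambda>n. \<Sum>i<n. real (qg_digit q i) / q ^ Suc i)"
    using qg_partial_sum[OF assms] by (auto simp: fun_eq_iff algebra_simps)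
  ultimately show v: "seq_val q (qg_digit q) = 1"
    unfolding seq_val_def by (simp add: sums_def sums_iff[symmetric] sums_unique[symmetric])
  have "seq_val q (shift n (qg_digit q)) / q ^ n = qg_rem q n / q ^ n"
    using seq_val_split[OF assms(1) qg_digit_Omega[OF assms], of n] v qg_partial_sum[OF assms, of n]
    by linarith
  then show "seq_val q (shift n (qg_digit q)) = qg_rem q n"
    using assms by (simp add: divide_cancel_right)
qed

lemma qg_digit_nonterminating:
  assumes "1 < q" "q \<le> real M + 1"
  shows "\<forall>N. \<exists>i\<ge>N. qg_digit q i \<noteq> 0"
proof (rule ccontr)
  assume "\<not> ?thesis"
  then obtain N where "\<forall>i\<ge>N. qg_digit q i = 0"
    by auto
  then have "shift N (qg_digit q) = (\<lambda>_. 0)"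
    by (auto simp: fun_eq_iff)
  then have "qg_rem q N = 0"
    using seq_val_qg_digit(2)[OF assms, of N] by (simp add: seq_val_def)
  then show False
    using qg_rem_bounds[OF assms(1), of N] by simp
qed

lemma QG_cand_lex_le:
  assumes q: "1 < q" and c: "c \<in> QG_cand M q" and tails: "\<forall>n. seq_val q (shift n c) \<le> 1"
    and b: "b \<in> QG_cand M q"
  shows "lex_le b c"
proof (rule ccontr)
  assume "\<not> lex_le b c"
  then obtain n where n: "\<forall>i<n. c i = b i" "c n < b n"
    by (auto simp: lex_le_iff_not_less lex_less_def)
  let ?S = "\<Sum>i<n. real (c i) / q ^ Suc i"
  have c': "c \<in> Omega M" and b': "b \<in> Omega M"
    using b c by (auto simp: QG_cand_iff)
  have "?S = (\<Sum>i<n. real (b i) / q ^ Suc i)"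
    using n(1) by (intro sum.cong) auto
  then have vb: "seq_val q b = ?S + (real (b n) + seq_val q (shift (Suc n) b)) / q ^ Suc n"
    using seq_val_split_Suc[OF q b'] by simp
  have "0 < seq_val q (shift (Suc n) b)"
    using b q by (intro seq_val_shift_pos[of _ _ M]) (auto simp: QG_cand_iff)
  then have "real (c n) + seq_val q (shift (Suc n) c) < real (b n) + seq_val q (shift (Suc n) b)"
    using tails[rule_format, of "Suc n"] n(2) by linarith
  then have "seq_val q c < seq_val q b"
    unfolding vb seq_val_split_Suc[OF q c', of n] using q
    by (intro add_strict_left_mono divide_strict_right_mono) auto
  then show False
    using b c by (simp add: QG_cand_iff)
qed

lemma alpha_eqI:
  assumes "1 < q" "c \<in> QG_cand M q" "\<forall>n. seq_val q (shift n c) \<le> 1"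
  shows "alpha M q = c"
  unfolding alpha_def using QG_cand_lex_le[OF assms] assms(2) lex_le_antisym by blast

lemma alpha_eq_qg_digit:
  assumes "1 < q" "q \<le> real M + 1"
  shows "alpha M q = qg_digit q"
proof (rule alpha_eqI[OF assms(1)])
  show "qg_digit q \<in> QG_cand M q"
    using qg_digit_Omega[OF assms] qg_digit_nonterminating[OF assms] seq_val_qg_digit(1)[OF assms]
    by (simp add: QG_cand_iff)
  show "\<forall>n. seq_val q (shift n (qg_digit q)) \<le> 1"
    using seq_val_qg_digit(2)[OF assms] qg_rem_bounds[OF assms(1)] by simp
qed

lemma alpha_expansion:
  assumes "1 < q" "q \<le> real M + 1"
  shows "alpha M q \<in> Omega M" "\<forall>N. \<exists>i\<ge>N. alpha M q i \<noteq> 0" "seq_val q (alpha M q) = 1"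
    "seq_val q (shift n (alpha M q)) \<le> 1"
  using alpha_eq_qg_digit[OF assms] qg_digit_Omega[OF assms] qg_digit_nonterminating[OF assms]
    seq_val_qg_digit[OF assms] qg_rem_bounds[OF assms(1)] by auto

lemma alpha_strict_mono:
  assumes "1 < q" "q < r" "r \<le> real M + 1"
  shows "lex_less (alpha M q) (alpha M r)"
proof (rule ccontr)
  let ?a = "alpha M q" and ?c = "alpha M r"
  have r: "1 < r"
    using assms by simp
  note A = alpha_expansion[OF assms(1), of M] and C = alpha_expansion[OF r assms(3)]
  have q: "q \<le> real M + 1"
    using assms by simp
  obtain i where "?a i \<noteq> 0"
    using A(2)[OF q] by blast
  then have less: "seq_val r ?a < seq_val q ?a"
    using seq_val_strict_antimono[OF assms(1,2) A(1)[OF q]] by blast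
  assume "\<not> lex_less ?a ?c"
  then have "lex_le ?c ?a"
    by (simp add: lex_le_iff_not_less)
  then consider "?c = ?a" | n where "\<forall>i<n. ?c i = ?a i" "?c n < ?a n"
    unfolding lex_le_def lex_less_def by blast
  then show False
  proof cases
    case 1
    then show False
      using less A(3)[OF q] C(3) by simp
  next
    case (2 n)
    let ?S = "\<Sum>i<n. real (?c i) / r ^ Suc i"
    have "?S = (\<Sum>i<n. real (?a i) / r ^ Suc i)"
      using 2(1) by (intro sum.cong) auto
    then have va: "seq_val r ?a = ?S + (real (?a n) + seq_val r (shift (Suc n) ?a)) / r ^ Suc n"
      using seq_val_split_Suc[OF r A(1)[OF q]] by simp
    have "0 \<le> seq_val r (shift (Suc n) ?a)"
      using seq_val_nonneg[OF r Omega_shift[OF A(1)[OF q]]] .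
    then have "real (?c n) + seq_val r (shift (Suc n) ?c) \<le> real (?a n) + seq_val r (shift (Suc n) ?a)"
      using C(4)[of "Suc n"] 2(2) by linarith
    then have "seq_val r ?c \<le> seq_val r ?a"
      unfolding va seq_val_split_Suc[OF r C(1), of n] using r
      by (intro add_left_mono divide_right_mono) auto
    then show False
      using less A(3)[OF q] C(3) by simp
  qed
qed

lemma alpha_less_iff:
  assumes "1 < q" "q \<le> real M + 1" "1 < r" "r \<le> real M + 1"
  shows "lex_less (alpha M q) (alpha M r) \<longleftrightarrow> q < r"
proof
  assume less: "lex_less (alpha M q) (alpha M r)"
  show "q < r"
  proof (rule ccontr)
    assume "\<not> q < r"
    then consider "q = r" | "r < q"
      by linarith
    then show False
      using less alpha_strict_mono[of r q M] assms lex_less_irrefl lex_less_asym by cases blast+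
  qed
qed (use alpha_strict_mono assms in blast)

lemma alpha_le_iff:
  assumes "1 < q" "q \<le> real M + 1" "1 < r" "r \<le> real M + 1"
  shows "lex_le (alpha M q) (alpha M r) \<longleftrightarrow> q \<le> r"
  using alpha_less_iff[OF assms(3,4,1,2)] by (simp add: lex_le_iff_not_less not_less)

lemma alpha_inj:
  assumes "1 < q" "q \<le> real M + 1" "1 < r" "r \<le> real M + 1" "alpha M q = alpha M r"
  shows "q = r"
  using alpha_le_iff[OF assms(1-4)] alpha_le_iff[OF assms(3,4,1,2)] assms(5) by simp

lemma seq_val_shift_le_max:
  assumes q: "1 < q" and c: "c \<in> Omega M" and v: "seq_val q c = 1"
    and le: "lex_le (shift m c) c" and S: "\<forall>n. seq_val q (shift n c) \<le> S"
  shows "seq_val q (shift m c) \<le> max 1 (1 + (S - 1) / q)"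
proof (cases "shift m c = c")
  case False
  then obtain j where j: "\<forall>i<j. c (m + i) = c i" "c (m + j) < c j"
    using le by (auto simp: lex_le_def lex_less_def)
  let ?f = "\<lambda>n. seq_val q (shift n c)"
  let ?P = "\<Sum>i<j. real (c i) / q ^ Suc i"
  let ?Q = "q ^ Suc j"
  have Q: "q \<le> ?Q" "0 < ?Q"
    using q by (auto intro: self_le_power)
  have "(\<Sum>i<j. real (shift m c i) / q ^ Suc i) = ?P"
    using j(1) by (intro sum.cong) auto
  then have fm: "?f m = ?P + (real (c (m + j)) + ?f (m + Suc j)) / ?Q"
    using seq_val_split_Suc[OF q Omega_shift[OF c], of m j] by simp
  have f0: "1 = ?P + (real (c j) + ?f (Suc j)) / ?Q"
    using seq_val_split_Suc[OF q c, of j] v by simp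
  have "real (c (m + j)) + ?f (m + Suc j) \<le> (real (c j) + ?f (Suc j)) + (S - 1)"
    using j(2) S[rule_format, of "m + Suc j"] seq_val_nonneg[OF q Omega_shift[OF c], of "Suc j"]
    by (simp add: of_nat_less_iff[symmetric])
  then have "(real (c (m + j)) + ?f (m + Suc j)) / ?Q \<le> (real (c j) + ?f (Suc j)) / ?Q + (S - 1) / ?Q"
    using Q by (simp add: divide_right_mono add_divide_distrib[symmetric])
  then have "?f m \<le> 1 + (S - 1) / ?Q"
    using fm f0 by linarith
  moreover have "(S - 1) / ?Q \<le> max 0 ((S - 1) / q)"
    using Q q by (cases "S \<le> 1") (auto simp: divide_nonpos_pos intro: divide_left_mono)
  ultimately show ?thesis
    by linarith
qed (simp add: v)

text \<open>One direction of Parry's criterion.\<close>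
lemma seq_val_shift_le_1:
  assumes q: "1 < q" and c: "c \<in> Omega M" and v: "seq_val q c = 1"
    and shifts: "\<forall>n. lex_le (shift n c) c"
  shows "seq_val q (shift m c) \<le> 1"
proof -
  define S where "S = (SUP n. seq_val q (shift n c))"
  have "bdd_above (range (\<lambda>n. seq_val q (shift n c)))"
    using seq_val_le[OF q Omega_shift[OF c]] by (intro bdd_aboveI2) blast
  then have upper: "\<forall>n. seq_val q (shift n c) \<le> S"
    unfolding S_def by (auto intro: cSUP_upper)
  have "S \<le> max 1 (1 + (S - 1) / q)"
    unfolding S_def
    by (rule cSUP_least) (use seq_val_shift_le_max[OF q c v shifts[rule_format] upper] in \<open>auto simp: S_def\<close>)
  have "S \<le> 1"
  proof (rule ccontr)
    assume S1: "\<not> S \<le> 1"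
    then have "S \<le> 1 + (S - 1) / q"
      using \<open>S \<le> max 1 (1 + (S - 1) / q)\<close> by (simp add: max_def split: if_splits)
    then have "(S - 1) * q \<le> S - 1"
      using q by (simp add: field_simps)
    then show False
      using S1 q by (simp add: mult_le_cancel_left1)
  qed
  then show ?thesis
    using upper by (meson order.trans)
qed

lemma exists_seq_val_eq_1:
  assumes M: "M \<ge> 1" and c: "c \<in> Omega M" and c0: "c 0 \<ge> 1" and j: "j \<ge> 1" "c j \<noteq> 0"
  shows "\<exists>q. 1 < q \<and> q \<le> real M + 1 \<and> seq_val q c = 1"
proof -
  define q0 where "q0 = root (Suc j) 2"
  have q0: "1 < q0" "q0 ^ Suc j = 2"
    unfolding q0_def by (auto intro: real_root_pow_pos2 simp del: power_Suc)
  have "q0 \<le> q0 ^ Suc j"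
    using q0 by (intro self_le_power) auto
  then have q02: "q0 \<le> 2"
    using q0(2) by (simp del: power_Suc)
  text \<open>At \<open>q0\<close> the two nonzero digits \<open>c 0\<close> and \<open>c j\<close> already contribute at least \<open>1/2\<close> each.\<close>
  have "real (c 0) / q0 + real (c j) / q0 ^ Suc j = (\<Sum>i\<in>{0, j}. real (c i) / q0 ^ Suc i)"
    using j by (simp del: power_Suc)
  also have "\<dots> \<le> seq_val q0 c"
    unfolding seq_val_def using q0 by (intro sum_le_suminf[OF summable_seq_val[OF q0(1) c]]) auto
  finally have "real (c 0) / q0 + real (c j) / q0 ^ Suc j \<le> seq_val q0 c" .
  moreover have "1/2 \<le> real (c 0) / q0"
    using c0 q02 q0 by (simp add: field_simps)
  moreover have "1/2 \<le> real (c j) / q0 ^ Suc j"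
    using j q0 by simp
  ultimately have "1 \<le> seq_val q0 c"
    by linarith
  moreover have "seq_val (real M + 1) c \<le> 1"
    using seq_val_le[of "real M + 1" c M] M c by simp
  moreover have "q0 \<le> real M + 1"
    using q02 M by simp
  ultimately obtain x where "q0 \<le> x" "x \<le> real M + 1" "seq_val x c = 1"
    using IVT2'[of "\<lambda>q. seq_val q c" "real M + 1" 1 q0] continuous_on_seq_val[OF q0(1) c] by auto
  then show ?thesis
    using q0 by (intro exI[of _ x]) auto
qed

lemma alpha_surj:
  assumes M: "M \<ge> 1" and c: "c \<in> Omega M" and nz: "\<forall>N. \<exists>i\<ge>N. c i \<noteq> 0"
    and shifts: "\<forall>n. lex_le (shift n c) c"
  shows "\<exists>q. 1 < q \<and> q \<le> real M + 1 \<and> alpha M q = c"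
proof -
  obtain i where i: "c i \<noteq> 0"
    using nz by blast
  then have c0: "c 0 \<ge> 1"
    using lex_le_imp_hd_le[OF shifts[rule_format, of i]] by simp
  obtain j where j: "j \<ge> 1" "c j \<noteq> 0"
    using nz by blast
  obtain q where q: "1 < q" "q \<le> real M + 1" "seq_val q c = 1"
    using exists_seq_val_eq_1[OF M c c0 j] by blast
  have "alpha M q = c"
    using c nz q seq_val_shift_le_1[OF q(1) c q(3) shifts]
    by (intro alpha_eqI[OF q(1)]) (auto simp: QG_cand_iff)
  then show ?thesis
    using q by blast
qed

text \<open>The special bases and \<open>Phi_hat\<close> are all defined as values of \<open>base\<close>.\<close>
definition base :: "nat \<Rightarrow> (nat \<Rightarrow> nat) \<Rightarrow> real" where
  "base M c = (THE q. 1 < q \<and> q \<le> real M + 1 \<and> alpha M q = c)"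

lemma base_alpha:
  assumes "1 < q" "q \<le> real M + 1"
  shows "base M (alpha M q) = q"
  unfolding base_def using assms alpha_inj[of _ M q] by (intro the_equality) auto

lemma base_props:
  assumes "M \<ge> 1" "c \<in> Omega M" "\<forall>N. \<exists>i\<ge>N. c i \<noteq> 0" "\<forall>n. lex_le (shift n c) c"
  shows "1 < base M c" "base M c \<le> real M + 1" "alpha M (base M c) = c"
  using alpha_surj[OF assms] base_alpha by metis+

section \<open>The block substitution\<close>

text \<open>\<open>block M b y\<close> is the \<open>\<L>\<^sub>u\<close>-label of an edge of \<open>G\<close> whose \<open>\<L>\<^sup>*\<close>-label is \<open>y\<close>
  and whose predecessor has \<open>\<L>\<^sup>*\<close>-label \<open>b\<close> (lemma \<open>Lu_eq_block\<close>); \<open>lift M b x\<close> replaces every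
  bit of \<open>x\<close> by its block, the bit before \<open>x 0\<close> being \<open>b\<close>.\<close>

definition blk_len :: "nat \<Rightarrow> nat" where
  "blk_len M = (if even M then 1 else 2)"

definition block :: "nat \<Rightarrow> nat \<Rightarrow> nat \<Rightarrow> nat list" where
  "block M b y = (if even M then [M div 2 + y - b] else [M div 2 + 1 - b, M div 2 + y])"

definition prev_bit :: "nat \<Rightarrow> (nat \<Rightarrow> nat) \<Rightarrow> nat \<Rightarrow> nat" where
  "prev_bit b x n = (if n = 0 then b else x (n - 1))"

definition lift :: "nat \<Rightarrow> nat \<Rightarrow> (nat \<Rightarrow> nat) \<Rightarrow> nat \<Rightarrow> nat" where
  "lift M b x i = block M (prev_bit b x (i div blk_len M)) (x (i div blk_len M)) ! (i mod blk_len M)"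

lemma blk_len_pos: "0 < blk_len M"
  by (simp add: blk_len_def)

lemma prev_bit_0 [simp]: "prev_bit b x 0 = b"
  and prev_bit_Suc [simp]: "prev_bit b x (Suc n) = x n"
  by (simp_all add: prev_bit_def)

lemma prev_bit_le_1: "b \<le> 1 \<Longrightarrow> x \<in> Omega 1 \<Longrightarrow> prev_bit b x n \<le> 1"
  by (simp add: prev_bit_def Omega_def)

lemma block_conj:
  assumes "r < blk_len M" "b \<le> 1" "y \<le> 1" "M \<ge> 1"
  shows "M - block M b y ! r = block M (1 - b) (1 - y) ! r"
  using assms by (cases "even M") (auto simp: block_def blk_len_def less_2_cases_iff elim!: evenE oddE)

lemma block_plus:
  assumes "r < blk_len M" "b \<le> 1" "M \<ge> 1"
  shows "block M (1 - b) 1 ! r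
    = (if r = blk_len M - 1 then M - block M b 1 ! r + 1 else M - block M b 1 ! r)"
  using assms by (cases "even M") (auto simp: block_def blk_len_def less_2_cases_iff elim!: evenE oddE)

lemma block_le:
  assumes "r < blk_len M" "b \<le> 1" "y \<le> 1" "M \<ge> 1"
  shows "block M b y ! r \<le> M"
  using assms by (cases "even M") (auto simp: block_def blk_len_def less_2_cases_iff elim!: evenE oddE)

lemma block_nth_eq: "r < blk_len M - 1 \<Longrightarrow> block M b y ! r = block M b y' ! r"
  by (auto simp: block_def blk_len_def split: if_splits)

lemma block_last_less:
  assumes "b \<le> 1" "M \<ge> 1"
  shows "block M b 0 ! (blk_len M - 1) < block M b 1 ! (blk_len M - 1)"
  using assms by (cases "even M") (auto simp: block_def blk_len_def elim!: evenE)

lemma block_hd: "block M b y ! 0 = (if even M then M div 2 + y - b else M div 2 + 1 - b)"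
  by (simp add: block_def)

lemma lift_block:
  assumes "r < blk_len M"
  shows "lift M b x (blk_len M * n + r) = block M (prev_bit b x n) (x n) ! r"
  using assms by (simp add: lift_def)

lemma lift_hd: "lift M b x 0 = block M b (x 0) ! 0"
  by (simp add: lift_def)

lemma lift_eq_prefix:
  assumes "\<forall>i<n. x i = y i" "i < blk_len M * n"
  shows "lift M b x i = lift M b y i"
proof -
  have "i div blk_len M < n"
    using assms(2) blk_len_pos[of M] by (simp add: div_less_iff_less_mult mult.commute)
  then show ?thesis
    using assms(1) by (simp add: lift_def prev_bit_def)
qed

lemma shift_lift: "shift (blk_len M * n) (lift M b x) = lift M (prev_bit b x n) (shift n x)"
proof
  fix i
  have "prev_bit b x (n + i div blk_len M) = prev_bit (prev_bit b x n) (shift n x) (i div blk_len M)"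
    by (cases "i div blk_len M") (auto simp: prev_bit_def)
  then show "shift (blk_len M * n) (lift M b x) i = lift M (prev_bit b x n) (shift n x) i"
    using blk_len_pos[of M] by (simp add: lift_def)
qed

lemma seq_conj_lift:
  assumes "b \<le> 1" "x \<in> Omega 1" "M \<ge> 1"
  shows "seq_conj M (lift M b x) = lift M (1 - b) (seq_conj 1 x)"
proof
  fix i
  have "prev_bit (1 - b) (seq_conj 1 x) n = 1 - prev_bit b x n" for n
    by (simp add: prev_bit_def)
  then show "seq_conj M (lift M b x) i = lift M (1 - b) (seq_conj 1 x) i"
    using block_conj prev_bit_le_1[OF assms(1,2)] Omega_le[OF assms(2)] assms(3) blk_len_pos[of M]
    by (simp add: lift_def)
qed

lemma lift_Omega:
  assumes "b \<le> 1" "x \<in> Omega 1" "M \<ge> 1"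
  shows "lift M b x \<in> Omega M"
  using block_le prev_bit_le_1[OF assms(1,2)] Omega_le[OF assms(2)] assms(3) blk_len_pos[of M]
  by (simp add: Omega_def lift_def)

lemma lift_nonterminating:
  assumes "b \<le> 1" "x \<in> Omega 1" "M \<ge> 1"
  shows "\<forall>N. \<exists>i\<ge>N. lift M b x i \<noteq> 0"
proof
  fix N
  have last: "blk_len M - 1 < blk_len M"
    using blk_len_pos[of M] by simp
  show "\<exists>i\<ge>N. lift M b x i \<noteq> 0"
  proof (cases "x N = 1")
    case True
    have "lift M b x (blk_len M * N + (blk_len M - 1)) \<noteq> 0"
      using lift_block[OF last] True prev_bit_le_1[OF assms(1,2), of N] assms(3)
      by (cases "even M") (auto simp: block_def blk_len_def elim!: evenE)
    moreover have "N \<le> blk_len M * N + (blk_len M - 1)"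
      by (simp add: blk_len_def)
    ultimately show ?thesis
      by blast
  next
    case False
    then have "x N = 0"
      using Omega_1_cases[OF assms(2), of N] by blast
    then have "lift M b x (blk_len M * Suc N + 0) \<noteq> 0"
      using lift_block[of 0 M b x "Suc N"] blk_len_pos[of M] assms(3) by (auto simp: block_hd elim!: evenE)
    moreover have "N \<le> blk_len M * Suc N + 0"
      using blk_len_pos[of M] by (simp add: blk_len_def)
    ultimately show ?thesis
      by blast
  qed
qed

lemma lift_strict_mono:
  assumes "x \<in> Omega 1" "y \<in> Omega 1" "b \<le> 1" "M \<ge> 1" "lex_less x y"
  shows "lex_less (lift M b x) (lift M b y)"
proof -
  obtain n where n: "\<forall>i<n. x i = y i" "x n < y n"
    using assms(5) by (auto simp: lex_less_def)
  then have xy: "x n = 0" "y n = 1"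
    using Omega_le[OF assms(1), of n] Omega_le[OF assms(2), of n] by auto
  have prev: "prev_bit b x n = prev_bit b y n"
    using n(1) by (simp add: prev_bit_def)
  let ?L = "blk_len M"
  show ?thesis
  proof (rule lex_lessI[of "?L * n + (?L - 1)"])
    fix i
    assume i: "i < ?L * n + (?L - 1)"
    show "lift M b x i = lift M b y i"
    proof (cases "i < ?L * n")
      case True
      then show ?thesis
        using lift_eq_prefix[OF n(1)] by blast
    next
      case False
      then obtain r where r: "i = ?L * n + r" "r < ?L - 1"
        using i by (metis add_less_cancel_left le_Suc_ex not_less)
      then show ?thesis
        using lift_block[of r M] prev block_nth_eq[OF r(2)] by simp
    qed
  next
    show "lift M b x (?L * n + (?L - 1)) < lift M b y (?L * n + (?L - 1))"
      using lift_block[of "?L - 1" M] blk_len_pos[of M] prev xy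
        block_last_less[OF prev_bit_le_1[OF assms(3,2)] assms(4)] by simp
  qed
qed

lemma lift_less_iff:
  assumes "x \<in> Omega 1" "y \<in> Omega 1" "b \<le> 1" "M \<ge> 1"
  shows "lex_less (lift M b x) (lift M b y) \<longleftrightarrow> lex_less x y"
  using lift_strict_mono[OF assms] lift_strict_mono[OF assms(2,1,3,4)] lex_less_linear[of x y]
    lex_less_asym lex_less_irrefl by blast

lemma lift_le_iff:
  assumes "x \<in> Omega 1" "y \<in> Omega 1" "b \<le> 1" "M \<ge> 1"
  shows "lex_le (lift M b x) (lift M b y) \<longleftrightarrow> lex_le x y"
  using lift_less_iff[OF assms(2,1,3,4)] by (simp add: lex_le_iff_not_less)

lemma lift_1_less_lift_0:
  assumes "y 0 \<le> x 0" "y 0 \<le> 1" "M \<ge> 1"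
  shows "lex_less (lift M 1 y) (lift M 0 x)"
proof (rule lex_less_hd)
  have "even M \<Longrightarrow> 1 \<le> M div 2"
    using assms(3) by (auto elim: evenE)
  then show "lift M 1 y 0 < lift M 0 x 0"
    using assms(1,2) by (auto simp: lift_hd block_hd)
qed

text \<open>For odd \<open>M\<close> these are the shifts that start inside a block.\<close>
lemma lift_odd_shift:
  assumes "odd M" "x \<in> Omega 1" "x 0 = 1"
  shows "lex_less (shift (2 * n + 1) (lift M 0 x)) (lift M 0 x)"
    "lex_less (seq_conj M (lift M 0 x)) (shift (2 * n + 1) (lift M 0 x))"
proof -
  have L: "blk_len M = 2"
    using assms by (simp add: blk_len_def)
  have hd: "lift M 0 x 0 = M div 2 + 1" "lift M 0 x 1 = M div 2 + 1"
    using assms by (auto simp: lift_def L block_def)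
  have s0: "lift M 0 x (2 * n + 1) = M div 2 + x n"
    using lift_block[of 1 M 0 x n] assms by (simp add: L block_def)
  have s1: "lift M 0 x (2 * n + 1 + 1) = M div 2 + 1 - x n"
    using lift_block[of 0 M 0 x "Suc n"] assms by (simp add: L block_def)
  have M: "M - (M div 2 + 1) = M div 2"
    using assms by (auto elim!: oddE)
  have xn: "x n = 0 \<or> x n = 1"
    using Omega_1_cases[OF assms(2)] .
  show "lex_less (shift (2 * n + 1) (lift M 0 x)) (lift M 0 x)"
  proof (cases "x n = 0")
    case True
    then show ?thesis
      using hd s0 by (intro lex_less_hd) simp
  next
    case False
    then show ?thesis
      using hd s0 s1 xn by (intro lex_lessI[of 1]) auto
  qed
  show "lex_less (seq_conj M (lift M 0 x)) (shift (2 * n + 1) (lift M 0 x))"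
  proof (cases "x n = 1")
    case True
    then show ?thesis
      using hd s0 M by (intro lex_less_hd) simp
  next
    case False
    then show ?thesis
      using hd s0 s1 M xn by (intro lex_lessI[of 1]) (auto simp: less_Suc_eq)
  qed
qed

section \<open>Lifting V-sequences\<close>

lemma run_start:
  fixes x :: "nat \<Rightarrow> nat" and n :: nat
  shows "\<exists>j\<le>n. (\<forall>i. j \<le> i \<and> i < n \<longrightarrow> x i = v) \<and> (0 < j \<longrightarrow> x (j - 1) \<noteq> v)"
proof (induction n)
  case (Suc n)
  show ?case
  proof (cases "x n = v")
    case True
    obtain j where "j \<le> n" "\<forall>i. j \<le> i \<and> i < n \<longrightarrow> x i = v" "0 < j \<longrightarrow> x (j - 1) \<noteq> v"
      using Suc.IH by blast
    then show ?thesis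
      using True by (intro exI[of _ j]) (auto simp: less_Suc_eq)
  next
    case False
    then show ?thesis
      by (intro exI[of _ "Suc n"]) auto
  qed
qed simp

lemma shift_le_of_ones_prefix:
  assumes x: "x \<in> Omega 1" and ones: "\<forall>i<n. x i = 1"
  shows "lex_le (shift n x) x"
proof (cases "\<forall>i. x i = 1")
  case True
  then have "shift n x = x"
    by (auto simp: fun_eq_iff)
  then show ?thesis
    by simp
next
  case False
  then obtain j where "x j \<noteq> 1"
    by auto
  define p where "p = (LEAST i. x i \<noteq> 1)"
  have p: "x p \<noteq> 1" "\<forall>i<p. x i = 1"
    unfolding p_def using LeastI[of "\<lambda>i. x i \<noteq> 1" j] \<open>x j \<noteq> 1\<close> not_less_Least by blast+
  then have "x p = 0" "n \<le> p"
    using Omega_1_cases[OF x, of p] ones by (auto simp: not_less[symmetric])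
  then have "lex_less (shift n x) x" if "n \<noteq> 0"
    using p that by (intro lex_lessI[of "p - n"]) auto
  then show ?thesis
    by (cases "n = 0") (auto intro: lex_less_imp_le)
qed

lemma ones_prefix_of_lex_le:
  assumes x: "x \<in> Omega 1" and le: "lex_le z x" and ones: "\<forall>i<d. z i = 1"
  shows "\<forall>i<d. x i = 1"
proof (rule ccontr)
  assume "\<not> ?thesis"
  then obtain j where j: "j < d" "x j \<noteq> 1"
    by auto
  define p where "p = (LEAST i. x i \<noteq> 1)"
  have "x p \<noteq> 1" "p \<le> j" "\<forall>i<p. x i = 1"
    unfolding p_def using LeastI[of "\<lambda>i. x i \<noteq> 1" j] Least_le[of "\<lambda>i. x i \<noteq> 1" j] j(2)
      not_less_Least by blast+
  then have "lex_less x z"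
    using ones j(1) Omega_1_cases[OF x, of p] by (intro lex_lessI[of p]) auto
  then show False
    using le by (simp add: lex_le_iff_not_less)
qed

text \<open>A shift is reduced to one starting right after a 0 (resp. a 1) by splitting off the maximal
  run of 1s (resp. 0s) in front of it.\<close>

lemma shift_le_of_zero_steps:
  assumes x: "x \<in> Omega 1" and step: "\<forall>n. x n = 0 \<longrightarrow> lex_le (shift (Suc n) x) x"
  shows "lex_le (shift n x) x"
proof (induction n rule: less_induct)
  case (less n)
  obtain j where j: "j \<le> n" "\<forall>i. j \<le> i \<and> i < n \<longrightarrow> x i = 1" "0 < j \<longrightarrow> x (j - 1) \<noteq> 1"
    using run_start[of n x 1] by blast
  have ones: "\<forall>i<n - j. shift j x i = 1"
    using j(1,2) by auto
  show ?case
  proof (cases "j = 0")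
    case True
    then have "\<forall>i<n. x i = 1"
      using j(2) by auto
    then show ?thesis
      by (rule shift_le_of_ones_prefix[OF x])
  next
    case False
    then have "x (j - 1) = 0"
      using j(3) Omega_1_cases[OF x, of "j - 1"] by simp
    then have sj: "lex_le (shift j x) x"
      using step[rule_format, of "j - 1"] False by simp
    then have "\<forall>i<n - j. shift j x i = x i"
      using ones_prefix_of_lex_le[OF x sj ones] ones by simp
    then have "lex_le (shift (n - j) (shift j x)) (shift (n - j) x)"
      by (rule lex_le_shift_common_prefix[OF sj])
    moreover have "lex_le (shift (n - j) x) x"
      using False j(1) by (intro less.IH) simp
    ultimately have "lex_le (shift (n - j) (shift j x)) x"
      by (rule lex_le_trans)
    then show ?thesis
      using j(1) by (simp add: shift_def)
  qed
qed

lemma conj_le_shift_of_steps: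
  assumes x: "x \<in> Omega 1" "x 0 = 1"
    and step0: "\<forall>n. x n = 0 \<longrightarrow> lex_le (shift (Suc n) x) x"
    and step1: "\<forall>n. x n = 1 \<longrightarrow> lex_le (seq_conj 1 x) (shift (Suc n) x)"
  shows "lex_le (seq_conj 1 x) (shift n x)"
proof (cases "n = 0")
  case True
  then show ?thesis
    using x(2) by (intro lex_less_imp_le lex_less_hd) simp
next
  case False
  obtain j where j: "j \<le> n" "\<forall>i. j \<le> i \<and> i < n \<longrightarrow> x i = 0" "0 < j \<longrightarrow> x (j - 1) \<noteq> 0"
    using run_start[of n x 0] by blast
  have "j \<noteq> 0"
    using j(2)[rule_format, of 0] False x(2) by auto
  then have "x (j - 1) = 1"
    using j(3) Omega_1_cases[OF x(1), of "j - 1"] by simp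
  then have sj: "lex_le (seq_conj 1 x) (shift j x)"
    using step1[rule_format, of "j - 1"] \<open>j \<noteq> 0\<close> by simp
  have zeros: "\<forall>i<n - j. shift j x i = 0"
    using j(1,2) by auto
  then have "\<forall>i<n - j. seq_conj 1 x i = shift j x i"
    using lex_le_zero_prefix[OF sj zeros] by simp
  then have "lex_le (shift (n - j) (seq_conj 1 x)) (shift (n - j) (shift j x))"
    by (rule lex_le_shift_common_prefix[OF sj])
  moreover have "lex_le (seq_conj 1 x) (seq_conj 1 (shift (n - j) x))"
    using lex_le_conj[OF shift_le_of_zero_steps[OF x(1) step0] x(1)] .
  moreover have "shift (n - j) (seq_conj 1 x) = seq_conj 1 (shift (n - j) x)"
    by (simp add: fun_eq_iff)
  ultimately show ?thesis
    using j(1) by (auto intro: lex_le_trans)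
qed

lemma Vseq_1_of_steps:
  assumes "x \<in> Omega 1" "x 0 = 1"
    "\<forall>n. x n = 0 \<longrightarrow> lex_le (shift (Suc n) x) x"
    "\<forall>n. x n = 1 \<longrightarrow> lex_le (seq_conj 1 x) (shift (Suc n) x)"
  shows "x \<in> Vseq 1"
  using shift_le_of_zero_steps[OF assms(1,3)] conj_le_shift_of_steps[OF assms] by (simp add: Vseq_def)

lemma Vseq_1_of_lift_Vseq:
  assumes M: "M \<ge> 1" and x: "x \<in> Omega 1" "x 0 = 1" and V: "lift M 0 x \<in> Vseq M"
  shows "x \<in> Vseq 1"
proof (rule Vseq_1_of_steps[OF x]; intro allI impI)
  fix n
  have shift: "shift (blk_len M * Suc n) (lift M 0 x) = lift M (x n) (shift (Suc n) x)"
    using shift_lift[of M "Suc n" 0 x] by simp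
  have x': "shift (Suc n) x \<in> Omega 1" "seq_conj 1 x \<in> Omega 1"
    by (rule Omega_shift[OF x(1)]) (simp add: Omega_def)
  show "lex_le (shift (Suc n) x) x" if "x n = 0"
    using Vseq_D(2)[OF V, of "blk_len M * Suc n"] lift_le_iff[OF x'(1) x(1) _ M] that
    unfolding shift by simp
  show "lex_le (seq_conj 1 x) (shift (Suc n) x)" if "x n = 1"
    using Vseq_D(1)[OF V, of "blk_len M * Suc n"] lift_le_iff[OF x'(2,1) _ M] that
      seq_conj_lift[OF _ x(1) M, of 0]
    unfolding shift by simp
qed

lemma lift_Vseq_block_shift:
  assumes M: "M \<ge> 1" and x: "x \<in> Omega 1" "x 0 = 1" and V: "x \<in> Vseq 1"
  shows "lex_le (seq_conj M (lift M 0 x)) (shift (blk_len M * n) (lift M 0 x))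
    \<and> lex_le (shift (blk_len M * n) (lift M 0 x)) (lift M 0 x)"
proof -
  have conj: "seq_conj M (lift M 0 x) = lift M 1 (seq_conj 1 x)"
    using seq_conj_lift[OF _ x(1) M] by simp
  have x': "shift n x \<in> Omega 1" "seq_conj 1 x \<in> Omega 1"
    by (rule Omega_shift[OF x(1)]) (simp add: Omega_def)
  consider "prev_bit 0 x n = 0" | "prev_bit 0 x n = 1"
    using prev_bit_le_1[OF _ x(1), of 0 n] by linarith
  then show ?thesis
  proof cases
    case 1
    have "lex_le (lift M 0 (shift n x)) (lift M 0 x)"
      using Vseq_D(2)[OF V] lift_le_iff[OF x'(1) x(1) _ M] by simp
    moreover have "lex_less (lift M 1 (seq_conj 1 x)) (lift M 0 (shift n x))"
      using x(2) by (intro lift_1_less_lift_0 M) auto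
    ultimately show ?thesis
      unfolding conj shift_lift 1 by (simp add: lex_less_imp_le)
  next
    case 2
    have "lex_less (lift M 1 (shift n x)) (lift M 0 x)"
      using x Omega_le[OF x'(1), of 0] by (intro lift_1_less_lift_0 M) auto
    moreover have "lex_le (lift M 1 (seq_conj 1 x)) (lift M 1 (shift n x))"
      using Vseq_D(1)[OF V] lift_le_iff[OF x'(2) x'(1) _ M] by simp
    ultimately show ?thesis
      unfolding conj shift_lift 2 by (simp add: lex_less_imp_le)
  qed
qed

lemma lift_Vseq_iff:
  assumes M: "M \<ge> 1" and x: "x \<in> Omega 1" "x 0 = 1"
  shows "lift M 0 x \<in> Vseq M \<longleftrightarrow> x \<in> Vseq 1"
proof
  assume V: "x \<in> Vseq 1"
  have "lex_le (seq_conj M (lift M 0 x)) (shift m (lift M 0 x)) \<and> lex_le (shift m (lift M 0 x)) (lift M 0 x)"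
    for m
  proof (cases "m mod blk_len M = 0")
    case True
    then show ?thesis
      using lift_Vseq_block_shift[OF M x V, of "m div blk_len M"] by (metis mult_div_mod_eq add_0_right)
  next
    case False
    then have "odd M" "m mod 2 = 1"
      using mod_less_divisor[OF blk_len_pos[of M], of m] by (auto simp: blk_len_def split: if_splits)
    moreover have "m = 2 * (m div 2) + m mod 2"
      by simp
    ultimately have odd: "odd M" and m: "m = 2 * (m div 2) + 1"
      by simp_all
    show ?thesis
      using lift_odd_shift[OF odd x, of "m div 2"] by (subst (1 2) m) (simp add: lex_less_imp_le)
  qed
  then show "lift M 0 x \<in> Vseq M"
    by (simp add: Vseq_def)
qed (rule Vseq_1_of_lift_Vseq[OF M x])

section \<open>Decoding\<close>

text \<open>Given the previous bit, the last digit of a block determines the bit it encodes.\<close>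
fun unlift :: "nat \<Rightarrow> (nat \<Rightarrow> nat) \<Rightarrow> nat \<Rightarrow> nat" where
  "unlift M c 0 = (if c (blk_len M - 1) = block M 0 1 ! (blk_len M - 1) then 1 else 0)"
| "unlift M c (Suc n) = (if c (blk_len M * Suc n + (blk_len M - 1))
      = block M (unlift M c n) 1 ! (blk_len M - 1) then 1 else 0)"

lemma unlift_eq:
  "unlift M c n = (if c (blk_len M * n + (blk_len M - 1))
     = block M (prev_bit 0 (unlift M c) n) 1 ! (blk_len M - 1) then 1 else 0)"
  by (cases n) simp_all

lemma unlift_Omega: "unlift M c \<in> Omega 1"
  unfolding Omega_def by (auto simp: unlift_eq[of M c])

lemma lift_const_block:
  assumes "r < blk_len M" "0 < m"
  shows "lift M b (\<lambda>_. y) (blk_len M * m + r) = block M y y ! r"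
  using assms by (simp add: lift_block prev_bit_def)

lemma shift_eq_lift_const_prefix:
  assumes pre: "\<forall>i < blk_len M * n. c i = lift M 0 x i" and j: "j \<le> n"
    and run: "\<forall>i. j \<le> i \<and> i < n \<longrightarrow> x i = v"
  shows "\<forall>i < blk_len M * (n - j). shift (blk_len M * j) c i = lift M (prev_bit 0 x j) (\<lambda>_. v) i"
    "shift (blk_len M * j) c (blk_len M * (n - j)) = c (blk_len M * n)"
proof -
  let ?L = "blk_len M"
  have n: "?L * j + ?L * (n - j) = ?L * n"
    using j by (simp add: add_mult_distrib2[symmetric])
  then show "shift (?L * j) c (?L * (n - j)) = c (?L * n)"
    by simp
  show "\<forall>i < ?L * (n - j). shift (?L * j) c i = lift M (prev_bit 0 x j) (\<lambda>_. v) i"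
  proof (intro allI impI)
    fix i
    assume i: "i < ?L * (n - j)"
    then have "shift (?L * j) c i = shift (?L * j) (lift M 0 x) i"
      using pre n by simp
    also have "\<dots> = lift M (prev_bit 0 x j) (shift j x) i"
      by (simp only: shift_lift)
    also have "\<dots> = lift M (prev_bit 0 x j) (\<lambda>_. v) i"
      using run i by (intro lift_eq_prefix) auto
    finally show "shift (?L * j) c i = lift M (prev_bit 0 x j) (\<lambda>_. v) i" .
  qed
qed

text \<open>If the bit before block \<open>n\<close> is 1, then the shift of \<open>c\<close> to the start of that run of 1s
  begins like \<open>lift M 0 (\<lambda>_. 1)\<close>; the digit \<open>M div 2 + 1\<close> at block \<open>n\<close> would make it
  exceed \<open>lift M 0 (\<lambda>_. 1)\<close>, hence \<open>c\<close>.\<close>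
lemma lift_prefix_next_digit_not_top:
  assumes M: "M \<ge> 1" and cV: "c \<in> Vseq M" and hi: "lex_le c (lift M 0 (\<lambda>_. 1))"
    and x: "x \<in> Omega 1" and pre: "\<forall>i < blk_len M * n. c i = lift M 0 x i" and prev: "prev_bit 0 x n = 1"
  shows "c (blk_len M * n) \<noteq> M div 2 + 1"
proof
  assume top: "c (blk_len M * n) = M div 2 + 1"
  let ?L = "blk_len M"
  obtain j where j: "j \<le> n" "\<forall>i. j \<le> i \<and> i < n \<longrightarrow> x i = 1" "0 < j \<longrightarrow> x (j - 1) \<noteq> 1"
    using run_start[of n x 1] by blast
  have "j < n"
    using j prev by (cases n) (auto simp: le_less)
  have "prev_bit 0 x j = 0"
    using j(3) Omega_1_cases[OF x] by (cases j) auto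
  then have "lex_less (lift M 0 (\<lambda>_. 1)) (shift (?L * j) c)"
    using shift_eq_lift_const_prefix[OF pre j(1,2)] lift_const_block[of 0 M "n - j" 0 1] blk_len_pos[of M]
      \<open>j < n\<close> top by (intro lex_lessI[of "?L * (n - j)"]) (auto simp: block_hd)
  moreover have "lex_le (shift (?L * j) c) c"
    using Vseq_D(2)[OF cV] .
  ultimately show False
    using hi lex_less_irrefl by (blast intro: lex_less_le_trans)
qed

lemma lift_zeros_block_start:
  assumes "0 < m \<or> b = 0"
  shows "lift M b (\<lambda>_. 0) (blk_len M * m) = M - M div 2"
proof -
  have "M - M div 2 = (if even M then M div 2 else M div 2 + 1)"
    by (cases "even M") (auto elim!: evenE oddE)
  then show ?thesis
    using assms lift_const_block[of 0 M m b 0] blk_len_pos[of M] by (cases m) (auto simp: lift_hd block_hd)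
qed

text \<open>Dually, if the bit before block \<open>n\<close> is 0, the shift to the start of that run of 0s begins
  like \<open>lift M b (\<lambda>_. 0)\<close>, and the digit \<open>M - M div 2 - 1\<close> would put it below that sequence;
  for \<open>b = 0\<close> this contradicts the lower bound on \<open>c\<close>, for \<open>b = 1\<close> the upper bound on its
  conjugate.\<close>
lemma lift_prefix_next_digit_not_bottom:
  assumes M: "M \<ge> 1" and cV: "c \<in> Vseq M" and lo: "lex_less (lift M 0 (\<lambda>_. 0)) c"
    and hi: "lex_le c (lift M 0 (\<lambda>_. 1))" and x: "x \<in> Omega 1"
    and pre: "\<forall>i < blk_len M * n. c i = lift M 0 x i" and prev: "prev_bit 0 x n = 0"
  shows "c (blk_len M * n) \<noteq> M - M div 2 - 1"
proof
  assume bot: "c (blk_len M * n) = M - M div 2 - 1"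
  let ?L = "blk_len M" and ?b = "prev_bit 0 x j"
  obtain j where j: "j \<le> n" "\<forall>i. j \<le> i \<and> i < n \<longrightarrow> x i = 0" "0 < j \<longrightarrow> x (j - 1) \<noteq> 0"
    using run_start[of n x 0] by blast
  have "0 < n - j \<or> prev_bit 0 x j = 0"
    using j(1,3) prev by (cases n) (auto simp: le_less)
  then have "lex_less (shift (?L * j) c) (lift M (prev_bit 0 x j) (\<lambda>_. 0))"
    using shift_eq_lift_const_prefix[OF pre j(1,2)] lift_zeros_block_start[of "n - j" "prev_bit 0 x j" M]
      M bot by (intro lex_lessI[of "?L * (n - j)"]) (auto simp: diff_less_mono2)
  moreover have "lex_le (lift M 1 (\<lambda>_. 0)) (shift (?L * j) c)" if "j \<noteq> 0"
  proof -
    have "lift M 1 (\<lambda>_. 0) = seq_conj M (lift M 0 (\<lambda>_. 1))"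
      using seq_conj_lift[of 0 "\<lambda>_. 1" M] M by (simp add: Omega_def seq_conj_def)
    moreover have "lex_le (seq_conj M (lift M 0 (\<lambda>_. 1))) (seq_conj M c)"
      using lex_le_conj[OF hi lift_Omega[of 0 "\<lambda>_. 1" M]] M by (simp add: Omega_def)
    ultimately show ?thesis
      using Vseq_D(1)[OF cV] lex_le_trans by metis
  qed
  moreover have "prev_bit 0 x j = (if j = 0 then 0 else 1)"
    using j(3) Omega_1_cases[OF x, of "j - 1"] by (cases j) auto
  ultimately show False
    using lo lex_less_asym lex_less_irrefl by (cases "j = 0") (auto dest: lex_le_less_trans)
qed

lemma block_of_digits:
  assumes M: "M \<ge> 1" and b: "b \<le> 1"
    and digits: "\<forall>r < blk_len M. M - M div 2 - 1 \<le> d r \<and> d r \<le> M div 2 + 1"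
    and top: "b = 1 \<Longrightarrow> d 0 \<noteq> M div 2 + 1" and bot: "b = 0 \<Longrightarrow> d 0 \<noteq> M - M div 2 - 1"
  shows "\<forall>r < blk_len M.
    d r = block M b (if d (blk_len M - 1) = block M b 1 ! (blk_len M - 1) then 1 else 0) ! r"
proof (cases "even M")
  case True
  then obtain k where "M = 2 * k" "1 \<le> k"
    using M by (auto elim!: evenE)
  moreover have "b = 0 \<or> b = 1"
    using b by linarith
  ultimately show ?thesis
    using digits[rule_format, of 0] top bot by (auto simp: block_def blk_len_def)
next
  case False
  then obtain k where k: "M = 2 * k + 1"
    by (auto elim!: oddE)
  have "d 0 \<le> k + 1" "d 1 \<le> k + 1" "k \<le> d 0" "k \<le> d 1"
    using digits k by (auto simp: blk_len_def)
  moreover have "b = 0 \<or> b = 1"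
    using b by linarith
  ultimately show ?thesis
    using k top bot by (auto simp: block_def blk_len_def less_2_cases_iff)
qed

lemma Vseq_between_lifts_hd:
  assumes M: "M \<ge> 1" and cV: "c \<in> Vseq M" and lo: "lex_less (lift M 0 (\<lambda>_. 0)) c"
    and hi: "lex_le c (lift M 0 (\<lambda>_. 1))"
  shows "c 0 = M div 2 + 1"
proof -
  have "c 0 \<le> M div 2 + 1"
    using lex_le_imp_hd_le[OF hi] by (simp add: lift_hd block_hd split: if_splits)
  moreover have "lift M 0 (\<lambda>_. 0) 0 \<le> c 0"
    using lex_le_imp_hd_le[OF lex_less_imp_le[OF lo]] .
  moreover have "c 0 \<noteq> M div 2" if "even M"
  proof
    assume "c 0 = M div 2"
    moreover have "M - M div 2 = M div 2"
      using that by (auto elim: evenE)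
    ultimately have "c = (\<lambda>_. M div 2)"
      using Vseq_digit_bounds[OF cV] by (metis le_antisym)
    moreover have "lift M 0 (\<lambda>_. 0) = (\<lambda>_. M div 2)"
      using that by (auto simp: lift_def block_def blk_len_def prev_bit_def)
    ultimately show False
      using lo lex_less_irrefl by simp
  qed
  ultimately show ?thesis
    by (cases "even M") (auto simp: lift_hd block_hd)
qed

lemma lift_unlift_prefix:
  assumes M: "M \<ge> 1" and cV: "c \<in> Vseq M" and lo: "lex_less (lift M 0 (\<lambda>_. 0)) c"
    and hi: "lex_le c (lift M 0 (\<lambda>_. 1))"
  shows "\<forall>i < blk_len M * n. c i = lift M 0 (unlift M c) i"
proof (induction n)
  case (Suc n)
  let ?L = "blk_len M" and ?x = "unlift M c"
  let ?b = "prev_bit 0 ?x n"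
  have digits: "\<forall>r < ?L. M - M div 2 - 1 \<le> c (?L * n + r) \<and> c (?L * n + r) \<le> M div 2 + 1"
    using Vseq_digit_bounds[OF cV] Vseq_between_lifts_hd[OF assms] by (metis diff_diff_left)
  have "\<forall>r < ?L. c (?L * n + r)
      = block M ?b (if c (?L * n + (?L - 1)) = block M ?b 1 ! (?L - 1) then 1 else 0) ! r"
    using block_of_digits[OF M prev_bit_le_1[OF _ unlift_Omega] digits]
      lift_prefix_next_digit_not_top[OF M cV hi unlift_Omega Suc.IH]
      lift_prefix_next_digit_not_bottom[OF M cV lo hi unlift_Omega Suc.IH] by simp
  then have block: "\<forall>r < ?L. c (?L * n + r) = lift M 0 ?x (?L * n + r)"
    using lift_block[of _ M 0 ?x n] unlift_eq[of M c n] by simp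
  show ?case
  proof (intro allI impI)
    fix i
    assume "i < ?L * Suc n"
    then show "c i = lift M 0 ?x i"
      using Suc.IH block[rule_format, of "i - ?L * n"] by (cases "i < ?L * n") auto
  qed
qed simp

lemma lift_Vseq_hd:
  assumes M: "M \<ge> 1" and x: "x \<in> Omega 1" and V: "lift M 0 x \<in> Vseq M"
    and nonzero: "lex_less (\<lambda>_. 0) x"
  shows "x 0 = 1"
proof (rule ccontr)
  assume "x 0 \<noteq> 1"
  then have x0: "x 0 = 0"
    using Omega_1_cases[OF x] by blast
  obtain i where "x i \<noteq> 0"
    using nonzero by (auto simp: lex_less_def)
  define p where "p = (LEAST i. x i \<noteq> 0)"
  have p: "x p \<noteq> 0" "\<forall>i<p. x i = 0"
    unfolding p_def using LeastI[of "\<lambda>i. x i \<noteq> 0" i] \<open>x i \<noteq> 0\<close> not_less_Least by blast+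
  have "p \<noteq> 0"
    using p(1) x0 by metis
  then have "x p = 1" "prev_bit 0 x p = 0"
    using p Omega_1_cases[OF x, of p] by (auto simp: prev_bit_def)
  then have "lex_le (lift M 0 (shift p x)) (lift M 0 x)"
    using Vseq_D(2)[OF V, of "blk_len M * p"] shift_lift[of M p 0 x] by simp
  then have "lex_le (shift p x) x"
    using lift_le_iff[OF Omega_shift[OF x] x _ M] by simp
  moreover have "lex_less x (shift p x)"
    using x0 \<open>x p = 1\<close> by (intro lex_less_hd) simp
  ultimately show False
    by (simp add: lex_le_iff_not_less)
qed

lemma Vseq_between_lifts_is_lift:
  assumes M: "M \<ge> 1" and cV: "c \<in> Vseq M" and lo: "lex_less (lift M 0 (\<lambda>_. 0)) c"
    and hi: "lex_le c (lift M 0 (\<lambda>_. 1))"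
  shows "\<exists>x \<in> Omega 1. x 0 = 1 \<and> c = lift M 0 x"
proof (intro bexI conjI)
  let ?x = "unlift M c"
  show c: "c = lift M 0 ?x"
  proof
    fix i
    have "i < blk_len M * Suc i"
      by (simp add: blk_len_def)
    then show "c i = lift M 0 ?x i"
      using lift_unlift_prefix[OF assms] by blast
  qed
  have "lift M 0 ?x \<in> Vseq M"
    using cV by (subst (asm) c)
  moreover have "lex_less (lift M 0 (\<lambda>_. 0)) (lift M 0 ?x)"
    using lo by (subst (asm) c)
  then have "lex_less (\<lambda>_. 0) ?x"
    using lift_less_iff[OF _ unlift_Omega _ M, of "\<lambda>_. 0" 0] by (simp add: Omega_def)
  ultimately show "?x 0 = 1"
    by (rule lift_Vseq_hd[OF M unlift_Omega])
qed (rule unlift_Omega)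

section \<open>Paths in the graph and the map \<open>\<Phi>\<^sub>u\<close>\<close>

fun edge_bit :: "edge \<Rightarrow> nat" where
  "edge_bit E0 = 1" | "edge_bit E3 = 1" | "edge_bit E4 = 1" | "edge_bit E1 = 0" | "edge_bit E2 = 0"

lemma Lstar_eq: "Lstar e = [edge_bit e]"
  by (cases e) auto

lemma Lu_eq_block:
  assumes "etgt e = esrc e'" "M \<ge> 1"
  shows "Lu M e' = block M (edge_bit e) (edge_bit e')"
  using assms
  by (cases "even M"; cases e; cases e')
    (auto simp: word_plus_def word_conj_def unit_lift_def block_def elim!: evenE oddE)

lemma Lu_E0: "Lu M E0 = block M 0 1"
  by (auto simp: word_plus_def unit_lift_def block_def)

lemma length_Lu: "length (Lu M e) = blk_len M"
  by (cases e) (auto simp: word_plus_def word_conj_def unit_lift_def blk_len_def)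

lemma word_concat_const_length:
  assumes "\<forall>j. length (w j) = L" "0 < L"
  shows "word_concat w i = w (i div L) ! (i mod L)"
proof -
  have start: "wstart w k = k * L" for k
    unfolding wstart_def using assms(1) by simp
  have "(LEAST k. i < wstart w (Suc k)) = i div L"
  proof (rule Least_equality)
    have "i div L * L + i mod L = i" "i mod L < L"
      using assms(2) by simp_all
    then show "i < wstart w (Suc (i div L))"
      unfolding start mult_Suc by linarith
    show "i div L \<le> k" if "i < wstart w (Suc k)" for k
      using that less_mult_imp_div_less[of i "Suc k" L] unfolding start by simp
  qed
  then show ?thesis
    unfolding word_concat_def Let_def start by (simp add: minus_div_mult_eq_mod)
qed

definition path_bits :: "(nat \<Rightarrow> edge) \<Rightarrow> nat \<Rightarrow> nat" where
  "path_bits p n = edge_bit (p n)"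

lemma path_bits_Omega: "path_bits p \<in> Omega 1"
proof -
  have "edge_bit e \<le> 1" for e
    by (cases e) auto
  then show ?thesis
    by (simp add: Omega_def path_bits_def)
qed

lemma word_concat_Lu_path:
  assumes "is_path p" "M \<ge> 1"
  shows "word_concat (\<lambda>i. Lu M (p i)) = lift M 0 (path_bits p)"
proof
  fix i
  have "Lu M (p n) = block M (prev_bit 0 (path_bits p) n) (path_bits p n)" for n
  proof (cases n)
    case 0
    then show ?thesis
      using assms(1) Lu_E0[of M] by (simp add: is_path_def path_bits_def)
  next
    case (Suc m)
    then show ?thesis
      using assms Lu_eq_block[of "p m" "p (Suc m)" M] by (simp add: is_path_def path_bits_def)
  qed
  moreover have "word_concat (\<lambda>i. Lu M (p i)) i = Lu M (p (i div blk_len M)) ! (i mod blk_len M)"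
    by (rule word_concat_const_length) (auto simp: length_Lu blk_len_pos)
  ultimately show "word_concat (\<lambda>i. Lu M (p i)) i = lift M 0 (path_bits p) i"
    by (simp add: lift_def)
qed

lemma word_concat_Lstar: "word_concat (\<lambda>i. Lstar (p i)) = path_bits p"
  using word_concat_const_length[of "\<lambda>i. Lstar (p i)" 1] by (auto simp: Lstar_eq path_bits_def)

definition path_of_bits :: "(nat \<Rightarrow> nat) \<Rightarrow> nat \<Rightarrow> edge" where
  "path_of_bits x n = (if n = 0 then E0
     else if x (n - 1) = 1 then (if x n = 1 then E4 else E1) else (if x n = 1 then E3 else E2))"

lemma path_bits_path_of_bits:
  assumes "x \<in> Omega 1" "x 0 = 1"
  shows "path_bits (path_of_bits x) = x"
proof
  fix n
  show "path_bits (path_of_bits x) n = x n"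
    using assms Omega_1_cases[OF assms(1), of n] by (cases n) (auto simp: path_bits_def path_of_bits_def)
qed

lemma is_path_path_of_bits:
  assumes "x \<in> Omega 1" "x 0 = 1"
  shows "is_path (path_of_bits x)"
proof -
  have "etgt (path_of_bits x n) = (if x n = 1 then VA else VB)" for n
    using assms by (cases n) (auto simp: path_of_bits_def)
  moreover have "esrc (path_of_bits x (Suc n)) = (if x n = 1 then VA else VB)" for n
    by (auto simp: path_of_bits_def)
  ultimately show ?thesis
    by (simp add: is_path_def path_of_bits_def)
qed

text \<open>Since \<open>lift M 0\<close> is injective, every path labelled \<open>lift M 0 x\<close> has \<open>\<L>\<^sup>*\<close>-labels \<open>x\<close>,
  whichever path the choice operator in \<open>Phi_u\<close> picks.\<close>
lemma Phi_u_lift: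
  assumes "x \<in> Omega 1" "x 0 = 1" "M \<ge> 1"
  shows "Phi_u M (lift M 0 x) = x"
proof -
  define p where "p = (SOME p. is_path p \<and> word_concat (\<lambda>i. Lu M (p i)) = lift M 0 x)"
  have "is_path (path_of_bits x) \<and> word_concat (\<lambda>i. Lu M (path_of_bits x i)) = lift M 0 x"
    using is_path_path_of_bits[OF assms(1,2)] word_concat_Lu_path[OF _ assms(3)]
      path_bits_path_of_bits[OF assms(1,2)] by simp
  then have "is_path p \<and> word_concat (\<lambda>i. Lu M (p i)) = lift M 0 x"
    unfolding p_def by (rule someI[of _ "path_of_bits x"])
  then have p: "is_path p" "word_concat (\<lambda>i. Lu M (p i)) = lift M 0 x"
    by simp_all
  have "lift M 0 (path_bits p) = lift M 0 x"
    unfolding word_concat_Lu_path[OF p(1) assms(3), symmetric] by (rule p(2))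
  then have "path_bits p = x"
    using lift_less_iff[OF path_bits_Omega assms(1) _ assms(3)] lift_less_iff[OF assms(1) path_bits_Omega _ assms(3)]
      lex_less_linear lex_less_irrefl by (metis zero_le)
  then show ?thesis
    unfolding Phi_u_def Let_def p_def[symmetric] word_concat_Lstar by simp
qed

lemma Phi_hat_eq_base: "Phi_hat M q = base 1 (Phi_u M (alpha M q))"
  by (simp add: Phi_hat_def base_def)

lemma Phi_hat_lift:
  assumes "M \<ge> 1" "x \<in> Omega 1" "x 0 = 1" "alpha M q = lift M 0 x"
  shows "Phi_hat M q = base 1 x"
  using Phi_u_lift[OF assms(2,3,1)] assms(4) by (simp add: Phi_hat_eq_base)

section \<open>The Thue--Morse sequence\<close>

declare bitsum.simps [simp del]

lemma bitsum_0 [simp]: "bitsum 0 = 0"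
  by (simp add: bitsum.simps)

lemma bitsum_even: "bitsum (2 * i) = bitsum i"
  by (cases "i = 0") (simp_all add: bitsum.simps[of "2 * i"])

lemma bitsum_odd: "bitsum (2 * i + 1) = Suc (bitsum i)"
  by (subst bitsum.simps) simp

lemma bitsum_pow2: "bitsum (2 ^ n) = 1"
  using bitsum_odd[of 0] bitsum_even by (induction n) simp_all

definition tm :: "nat \<Rightarrow> nat" where
  "tm i = bitsum i mod 2"

definition tm_tail :: "nat \<Rightarrow> nat" where
  "tm_tail j = tm (Suc j)"

lemma tm_le_1: "tm i \<le> 1"
  by (simp add: tm_def)

lemma tm_0 [simp]: "tm 0 = 0"
  by (simp add: tm_def)

lemma tm_even: "tm (2 * i) = tm i"
  by (simp add: tm_def bitsum_even)

lemma tm_odd: "tm (2 * i + 1) = 1 - tm i"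
  unfolding tm_def bitsum_odd by presburger

lemma tau_eq_tm: "tau i = int (tm i)"
  by (simp add: tau_def tm_def)

lemma tm_tail_Omega: "tm_tail \<in> Omega 1"
  using tm_le_1 by (simp add: Omega_def tm_tail_def)

lemma tm_tail_0: "tm_tail 0 = 1"
  using tm_odd[of 0] by (simp add: tm_tail_def)

lemma tm_tail_pow2_minus_1: "tm_tail (2 ^ n - 1) = 1"
  by (simp add: tm_tail_def tm_def bitsum_pow2)

lemma prev_bit_tm_tail: "prev_bit 0 tm_tail j = tm j"
  by (cases j) (simp_all add: tm_tail_def)

lemma lam_1: "lam 1 (Suc j) = tm_tail j"
  by (simp add: lam_def tau_eq_tm tm_tail_def)

lemma lam_1_pow2: "lam 1 (2 ^ n) = 1"
  using lam_1[of "2 ^ n - 1"] tm_tail_pow2_minus_1[of n] by simp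

text \<open>\<open>\<alpha>(q\<^sub>K\<^sub>L)\<close> is the lift of \<open>\<alpha>\<^sup>*(q\<^sup>*\<^sub>K\<^sub>L)\<close>: this is \<open>\<tau>\<^sub>2\<^sub>i = \<tau>\<^sub>i\<close>,
  \<open>\<tau>\<^sub>2\<^sub>i\<^sub>+\<^sub>1 = 1 - \<tau>\<^sub>i\<close> in disguise.\<close>
lemma lam_eq_lift_tm_tail:
  assumes M: "M \<ge> 1"
  shows "lam M (Suc j) = lift M 0 tm_tail j"
proof (cases "even M")
  case True
  then have "1 \<le> M div 2"
    using M by (auto elim!: evenE)
  then show ?thesis
    using True tm_le_1[of j] by (simp add: lam_def tau_eq_tm lift_def blk_len_def block_def prev_bit_tm_tail tm_tail_def)
next
  case False
  then have lam: "lam M (Suc j) = M div 2 + tm (Suc j)"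
    by (simp add: lam_def tau_eq_tm)
  obtain m r where j: "j = 2 * m + r" "r < 2"
    by (metis div_mult_mod_eq mod_less_divisor zero_less_numeral mult.commute)
  then consider "r = 0" | "r = 1"
    by linarith
  then show ?thesis
  proof cases
    case 1
    have "lift M 0 tm_tail j = M div 2 + 1 - tm m"
      using lift_block[of 0 M 0 tm_tail m] j 1 False by (simp add: blk_len_def block_def prev_bit_tm_tail)
    then show ?thesis
      using lam tm_odd[of m] tm_le_1[of m] j 1 by simp
  next
    case 2
    have "lift M 0 tm_tail j = M div 2 + tm (Suc m)"
      using lift_block[of 1 M 0 tm_tail m] j 2 False by (simp add: blk_len_def block_def tm_tail_def)
    then show ?thesis
      using lam tm_even[of "Suc m"] j 2 by simp
  qed
qed

section \<open>The bases \<open>q\<^sub>n'\<close>\<close>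

definition qprime_seq :: "nat \<Rightarrow> nat \<Rightarrow> nat \<Rightarrow> nat" where
  "qprime_seq M N = (let w = map (lam M) [1..<N + 1] in seq_app w (cyc (word_plus (word_conj M w))))"

lemma qprime_eq_base: "n \<ge> 1 \<Longrightarrow> qprime M n = base M (qprime_seq M (Nlen M n))"
  by (simp add: qprime_def qprime_seq_def base_def Let_def)

lemma qprime_seq_nth:
  assumes N: "N \<ge> 1"
  shows "qprime_seq M N i = (if i < N then lam M (Suc i)
    else if (i - N) mod N = N - 1 then M - lam M (Suc ((i - N) mod N)) + 1
    else M - lam M (Suc ((i - N) mod N)))"
proof -
  define w where "w = map (lam M) [1..<N + 1]"
  define v where "v = word_plus (word_conj M w)"
  have w: "length w = N" "j < N \<Longrightarrow> w ! j = lam M (Suc j)" for j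
    unfolding w_def by (simp, subst nth_map_upt) auto
  have conj: "word_conj M w \<noteq> []" "length (word_conj M w) = N"
    using w N by (auto simp: word_conj_def)
  have v: "length v = N"
    "j < N \<Longrightarrow> v ! j = (if j = N - 1 then M - lam M (Suc j) + 1 else M - lam M (Suc j))" for j
    unfolding v_def word_plus_def using conj w(2)[of j] w(2)[of "N - 1"] N
    by (auto simp: nth_append nth_butlast last_conv_nth word_conj_def)
  have "qprime_seq M N i = seq_app w (cyc v) i"
    by (simp add: qprime_seq_def Let_def w_def v_def)
  also have "\<dots> = (if i < N then w ! i else v ! ((i - N) mod N))"
    by (simp add: seq_app_def cyc_def w(1) v(1))
  finally show ?thesis
    using w v N by simp
qed

text \<open>\<open>tm_approx n = \<alpha>\<^sup>*(q\<^sup>*\<^sub>n')\<close>.\<close>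
definition tm_approx :: "nat \<Rightarrow> nat \<Rightarrow> nat" where
  "tm_approx n = qprime_seq 1 (2 ^ n)"

lemma tm_approx_prefix: "m < 2 ^ n \<Longrightarrow> tm_approx n m = tm_tail m"
  using qprime_seq_nth[of "2 ^ n" 1 m] by (simp add: tm_approx_def lam_1[simplified])

lemma tm_approx_periodic:
  assumes "2 ^ n \<le> m"
  shows "tm_approx n m
    = (if (m - 2 ^ n) mod 2 ^ n = 2 ^ n - 1 then 1 else 1 - tm_tail ((m - 2 ^ n) mod 2 ^ n))"
  using qprime_seq_nth[of "2 ^ n" 1 m] assms lam_1_pow2[of n]
  by (auto simp: tm_approx_def lam_1[simplified])

lemma tm_approx_Omega: "tm_approx n \<in> Omega 1"
proof -
  have "tm_approx n i \<le> 1" for i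
    using tm_approx_prefix[of i n] tm_approx_periodic[of n i] Omega_le[OF tm_tail_Omega]
    by (cases "i < 2 ^ n") auto
  then show ?thesis
    by (simp add: Omega_def)
qed

lemma tm_approx_hd: "tm_approx n 0 = 1"
  using tm_approx_prefix[of 0 n] tm_tail_0 by simp

lemma tm_approx_zero: "tm_approx 0 = (\<lambda>_. 1)"
proof
  show "tm_approx 0 i = 1" for i
    using tm_approx_prefix[of i 0] tm_approx_periodic[of 0 i] tm_tail_0 by (cases "i = 0") auto
qed

lemma prev_bit_tm_approx:
  assumes "2 ^ n \<le> m"
  shows "prev_bit 0 (tm_approx n) m = 1 - tm ((m - 2 ^ n) mod 2 ^ n)"
proof (cases "m = 2 ^ n")
  case True
  then show ?thesis
    using tm_approx_prefix[of "m - 1" n] tm_tail_pow2_minus_1[of n] by (simp add: prev_bit_def)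
next
  case False
  define N :: nat where "N = 2 ^ n"
  define s where "s = m - 1 - N"
  have N: "1 \<le> N" "N \<le> m - 1" "m - N = Suc s"
    using assms False by (auto simp: N_def s_def)
  have "prev_bit 0 (tm_approx n) m = (if s mod N = N - 1 then 1 else 1 - tm_tail (s mod N))"
    using tm_approx_periodic[of n "m - 1"] N by (simp add: prev_bit_def N_def s_def)
  moreover have "Suc s mod N = (if Suc (s mod N) = N then 0 else Suc (s mod N))"
    by (rule mod_Suc)
  moreover have "s mod N < N"
    using N(1) by simp
  ultimately show ?thesis
    unfolding N_def[symmetric] N(3) by (auto simp: tm_tail_def)
qed

lemma mod_mult_block:
  fixes L t r N :: nat
  assumes "r < L"
  shows "(L * t + r) mod (L * N) = L * (t mod N) + r"
  using assms mod_mult2_eq[of "L * t + r" L N] by simp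

lemma lift_tm_approx_periodic:
  assumes M: "M \<ge> 1" and r: "r < blk_len M" and m: "2 ^ n \<le> m"
  defines "j \<equiv> (m - 2 ^ n) mod 2 ^ n"
  shows "lift M 0 (tm_approx n) (blk_len M * m + r)
    = (if blk_len M * j + r = blk_len M * 2 ^ n - 1 then M - lam M (Suc (blk_len M * j + r)) + 1
       else M - lam M (Suc (blk_len M * j + r)))"
proof -
  let ?L = "blk_len M"
  have "j < 2 ^ n"
    by (simp add: j_def)
  have lam: "lam M (Suc (?L * j + r)) = block M (tm j) (tm_tail j) ! r"
    using lam_eq_lift_tm_tail[OF M] lift_block[OF r] by (simp add: prev_bit_tm_tail)
  have lift: "lift M 0 (tm_approx n) (?L * m + r) = block M (1 - tm j) (tm_approx n m) ! r"
    using lift_block[OF r] prev_bit_tm_approx[OF m] by (simp add: j_def)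
  have last: "?L * j + r = ?L * N - 1 \<longleftrightarrow> j = N - 1 \<and> r = ?L - 1" if "j < N" for N
    using that r by (cases "even M") (auto simp: blk_len_def)
  show ?thesis
  proof (cases "j = 2 ^ n - 1")
    case True
    then show ?thesis
      unfolding lift lam last[OF \<open>j < 2 ^ n\<close>] using tm_approx_periodic[OF m] tm_tail_pow2_minus_1[of n]
        block_plus[OF r tm_le_1 M] by (simp add: j_def)
  next
    case False
    then show ?thesis
      unfolding lift lam last[OF \<open>j < 2 ^ n\<close>] using tm_approx_periodic[OF m] block_conj[OF r tm_le_1 _ M]
        Omega_le[OF tm_tail_Omega] by (simp add: j_def)
  qed
qed

text \<open>\<open>\<alpha>(q\<^sub>n\<^sub>+\<^sub>1')\<close> is the lift of \<open>\<alpha>\<^sup>*(q\<^sup>*\<^sub>n')\<close>.\<close>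
lemma lift_tm_approx:
  assumes M: "M \<ge> 1"
  shows "lift M 0 (tm_approx n) = qprime_seq M (blk_len M * 2 ^ n)"
proof
  fix i
  let ?L = "blk_len M"
  define m where "m = i div ?L"
  define r where "r = i mod ?L"
  have i: "i = ?L * m + r" and r: "r < ?L"
    using blk_len_pos[of M] by (simp_all add: m_def r_def)
  have LN: "1 \<le> ?L * 2 ^ n"
    using blk_len_pos[of M] by simp
  show "lift M 0 (tm_approx n) i = qprime_seq M (?L * 2 ^ n) i"
  proof (cases "m < 2 ^ n")
    case True
    have "?L * m + r < ?L * Suc m"
      using r by simp
    also have "\<dots> \<le> ?L * 2 ^ n"
      using True by (intro mult_le_mono2) simp
    finally have "?L * m + r < ?L * 2 ^ n" .
    then have "lift M 0 (tm_approx n) i = lift M 0 tm_tail i"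
      unfolding i using tm_approx_prefix by (intro lift_eq_prefix) auto
    then show ?thesis
      using qprime_seq_nth[OF LN] lam_eq_lift_tm_tail[OF M] \<open>?L * m + r < ?L * 2 ^ n\<close> i by simp
  next
    case False
    then have "?L * 2 ^ n \<le> ?L * m"
      by simp
    then have "\<not> i < ?L * 2 ^ n"
      unfolding i by linarith
    moreover have "i - ?L * 2 ^ n = ?L * (m - 2 ^ n) + r"
      unfolding i using False by (simp add: diff_mult_distrib2)
    ultimately show ?thesis
      using qprime_seq_nth[OF LN, of M i] lift_tm_approx_periodic[OF M r, of n m] False
        mod_mult_block[OF r, of "m - 2 ^ n" "2 ^ n"] i by simp
  qed
qed

lemma tm_approx_Suc: "tm_approx (Suc n) = lift 1 0 (tm_approx n)"
  using lift_tm_approx[of 1 n] by (simp add: tm_approx_def blk_len_def)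

lemma tm_approx_Vseq: "tm_approx n \<in> Vseq 1"
proof (induction n)
  case 0
  have "lex_less (seq_conj 1 (\<lambda>_. 1)) (\<lambda>_. 1)"
    by (intro lex_less_hd) simp
  then show ?case
    by (simp add: tm_approx_zero Vseq_def shift_def lex_less_imp_le)
next
  case (Suc n)
  then show ?case
    using lift_Vseq_iff[of 1 "tm_approx n"] tm_approx_Omega tm_approx_hd by (simp add: tm_approx_Suc)
qed

lemma tm_tail_Vseq: "tm_tail \<in> Vseq 1"
proof (rule Vseq_closed[rule_format])
  show "\<exists>y\<in>Vseq 1. \<forall>i<m. y i = tm_tail i" for m
  proof (rule bexI[OF _ tm_approx_Vseq[of m]])
    show "\<forall>i<m. tm_approx m i = tm_tail i"
    proof (intro allI impI)
      fix i
      assume "i < m"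
      then show "tm_approx m i = tm_tail i"
        using less_exp[of m] by (intro tm_approx_prefix) linarith
    qed
  qed
qed

section \<open>The correspondence between \<open>(q\<^sub>G, q\<^sub>T] \<inter> \<V>\<close> and \<open>\<V>\<^sup>*\<close>\<close>

text \<open>The quasi-greedy expansions \<open>\<alpha>\<^sup>*(p)\<close>, \<open>p \<in> \<V>\<^sup>*\<close> (lemma \<open>Vset_1_eq\<close>).\<close>
definition Vstar :: "(nat \<Rightarrow> nat) set" where
  "Vstar = {x \<in> Omega 1 \<inter> Vseq 1. x 0 = 1}"

lemma Vstar_nonterminating: "x \<in> Vstar \<Longrightarrow> \<forall>N. \<exists>i\<ge>N. x i \<noteq> 0"
  using Vseq_nonterminating[of 1 x 0] by (simp add: Vstar_def)

lemma base_1_Vstar: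
  assumes "x \<in> Vstar"
  shows "base 1 x \<in> Vset 1" "alpha 1 (base 1 x) = x"
  using base_props[of 1 x] Vstar_nonterminating[OF assms] assms Vseq_D(2)
  by (auto simp: Vstar_def Vset_def)

lemma alpha_1_Vstar:
  assumes "p \<in> Vset 1"
  shows "alpha 1 p \<in> Vstar"
proof -
  have p: "1 < p" "p \<le> real 1 + 1" and V: "alpha 1 p \<in> Vseq 1"
    using assms by (auto simp: Vset_def)
  obtain i where "alpha 1 p i \<noteq> 0"
    using alpha_expansion(2)[OF p] by blast
  then have "alpha 1 p 0 = 1"
    using lex_le_imp_hd_le[OF Vseq_D(2)[OF V, of i]] Omega_le[OF alpha_expansion(1)[OF p], of 0] by simp
  then show ?thesis
    using alpha_expansion(1)[OF p] V by (simp add: Vstar_def)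
qed

lemma Vset_1_eq: "Vset 1 = base 1 ` Vstar"
proof
  show "Vset 1 \<subseteq> base 1 ` Vstar"
  proof
    fix p
    assume p: "p \<in> Vset 1"
    then have "p = base 1 (alpha 1 p)"
      by (simp add: Vset_def base_alpha)
    then show "p \<in> base 1 ` Vstar"
      using alpha_1_Vstar[OF p] by blast
  qed
qed (use base_1_Vstar in blast)

lemma base_lift_Vstar:
  assumes M: "M \<ge> 1" and x: "x \<in> Vstar"
  shows "1 < base M (lift M 0 x)" "base M (lift M 0 x) \<le> real M + 1"
    "alpha M (base M (lift M 0 x)) = lift M 0 x" "lift M 0 x \<in> Vseq M"
proof -
  show V: "lift M 0 x \<in> Vseq M"
    using lift_Vseq_iff[OF M] x by (simp add: Vstar_def)
  show "1 < base M (lift M 0 x)" "base M (lift M 0 x) \<le> real M + 1"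
    "alpha M (base M (lift M 0 x)) = lift M 0 x"
    using base_props[OF M] lift_Omega[OF _ _ M] lift_nonterminating[OF _ _ M] Vseq_D(2)[OF V] x
    by (simp_all add: Vstar_def)
qed

lemma base_lift_less_iff:
  assumes M: "M \<ge> 1" and "x \<in> Vstar" "y \<in> Vstar"
  shows "base M (lift M 0 x) < base M (lift M 0 y) \<longleftrightarrow> lex_less x y"
proof -
  note X = base_lift_Vstar[OF M assms(2)] and Y = base_lift_Vstar[OF M assms(3)]
  have "base M (lift M 0 x) < base M (lift M 0 y) \<longleftrightarrow> lex_less (lift M 0 x) (lift M 0 y)"
    using alpha_less_iff[OF X(1,2) Y(1,2)] X(3) Y(3) by simp
  also have "\<dots> \<longleftrightarrow> lex_less x y"
    using lift_less_iff[OF _ _ _ M] assms(2,3) by (simp add: Vstar_def)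
  finally show ?thesis .
qed

lemma base_1_less_iff:
  assumes "x \<in> Vstar" "y \<in> Vstar"
  shows "base 1 x < base 1 y \<longleftrightarrow> lex_less x y"
  using alpha_less_iff[of "base 1 x" 1 "base 1 y"] base_1_Vstar[OF assms(1)] base_1_Vstar[OF assms(2)]
  by (simp add: Vset_def)

lemma lift_zeros_shift_le:
  assumes M: "M \<ge> 1"
  shows "lex_le (shift m (lift M 0 (\<lambda>_. 0))) (lift M 0 (\<lambda>_. 0))"
proof (cases "m mod blk_len M = 0")
  case True
  then have "m = blk_len M * (m div blk_len M)"
    using mult_div_mod_eq[of "blk_len M" m] by simp
  then have "shift m (lift M 0 (\<lambda>_. 0)) = lift M 0 (shift (m div blk_len M) (\<lambda>_. 0))"
    using shift_lift[of M "m div blk_len M" 0 "\<lambda>_. 0"] by (simp add: prev_bit_def)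
  also have "shift (m div blk_len M) (\<lambda>_. 0::nat) = (\<lambda>_. 0)"
    by (simp add: shift_def)
  finally show ?thesis
    by (metis lex_le_refl)
next
  case False
  then have "odd M" "m mod 2 = 1"
    using mod_less_divisor[OF blk_len_pos[of M], of m] by (auto simp: blk_len_def split: if_splits)
  then have "lift M 0 (\<lambda>_. 0) (2 * (m div 2) + 1) = M div 2" "m = 2 * (m div 2) + 1"
    using lift_block[of 1 M 0 "\<lambda>_. 0" "m div 2"] div_mult_mod_eq[of m 2]
    by (simp_all add: blk_len_def block_def prev_bit_def)
  then have "shift m (lift M 0 (\<lambda>_. 0)) 0 < lift M 0 (\<lambda>_. 0) 0"
    using \<open>odd M\<close> by (simp add: lift_hd block_hd)
  then show ?thesis
    by (intro lex_less_imp_le lex_less_hd)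
qed

lemma cyc_unit_lift: "cyc (unit_lift M) = lift M 0 (\<lambda>_. 0)"
proof
  fix i
  have "unit_lift M = block M 0 0" "length (block M 0 0) = blk_len M"
    by (simp_all add: unit_lift_def block_def blk_len_def)
  then show "cyc (unit_lift M) i = lift M 0 (\<lambda>_. 0) i"
    by (simp add: cyc_def lift_def prev_bit_def)
qed

lemma qG_eq: "qG M = base M (lift M 0 (\<lambda>_. 0))"
  by (simp add: qG_def base_def cyc_unit_lift)

lemma alpha_qG:
  assumes M: "M \<ge> 1"
  shows "1 < qG M" "qG M \<le> real M + 1" "alpha M (qG M) = lift M 0 (\<lambda>_. 0)"
  unfolding qG_eq
  using base_props[OF M] lift_Omega[OF _ _ M] lift_nonterminating[OF _ _ M] lift_zeros_shift_le[OF M]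
  by (simp_all add: Omega_def)

lemma qprime_Suc_eq: "qprime M (Suc n) = base M (lift M 0 (tm_approx n))" if "M \<ge> 1"
  using lift_tm_approx[OF that] by (simp add: qprime_eq_base Nlen_def blk_len_def)

lemma qT_eq: "qT M = base M (lift M 0 (\<lambda>_. 1))" if "M \<ge> 1"
  using qprime_Suc_eq[OF that, of 0] by (simp add: qT_def tm_approx_zero)

lemma qKL_eq: "qKL M = base M (lift M 0 tm_tail)" if "M \<ge> 1"
  using lam_eq_lift_tm_tail[OF that] by (simp add: qKL_def base_def)

lemma alpha_1_2: "alpha 1 2 = (\<lambda>_. 1)"
proof (rule alpha_eqI)
  have "(\<lambda>i. (1/2::real) ^ Suc i) sums 1"
    by (rule power_half_series)
  then have v: "seq_val 2 (\<lambda>_. 1) = 1"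
    unfolding seq_val_def by (simp add: power_one_over sums_iff)
  then show "(\<lambda>_. 1) \<in> QG_cand 1 2"
    by (auto simp: QG_cand_iff Omega_def)
  show "\<forall>n. seq_val 2 (shift n (\<lambda>_. 1)) \<le> 1"
    using v by (simp add: shift_def)
qed simp

lemma qprime_1_eq: "qprime 1 n = base 1 (tm_approx n)"
proof (cases n)
  case 0
  then show ?thesis
    using base_alpha[of 2 1, unfolded alpha_1_2] by (simp add: qprime_def tm_approx_zero)
next
  case (Suc m)
  then show ?thesis
    using qprime_Suc_eq[of 1 m] by (simp add: tm_approx_Suc)
qed

lemma qKL_1_eq: "qKL 1 = base 1 tm_tail"
  using lam_1 by (simp add: qKL_def base_def)

lemma tm_tail_Vstar: "tm_tail \<in> Vstar"
  using tm_tail_Omega tm_tail_Vseq tm_tail_0 by (simp add: Vstar_def)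

lemma tm_approx_Vstar: "tm_approx n \<in> Vstar"
  using tm_approx_Omega tm_approx_Vseq tm_approx_hd by (simp add: Vstar_def)

lemma alpha_qT:
  assumes M: "M \<ge> 1"
  shows "1 < qT M" "qT M \<le> real M + 1" "alpha M (qT M) = lift M 0 (\<lambda>_. 1)"
  using base_lift_Vstar(1-3)[OF M tm_approx_Vstar[of 0]] unfolding tm_approx_zero qT_eq[OF M] by simp_all

lemma dom_imp_base_lift:
  assumes M: "M \<ge> 1" and q: "q \<in> {qG M<..qT M} \<inter> Vset M"
  shows "\<exists>x \<in> Vstar. q = base M (lift M 0 x)"
proof -
  note G = alpha_qG[OF M] and T = alpha_qT[OF M]
  have q1: "1 < q" "q \<le> real M + 1" and V: "alpha M q \<in> Vseq M"
    using q by (auto simp: Vset_def)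
  have "lex_less (lift M 0 (\<lambda>_. 0)) (alpha M q)"
    using alpha_less_iff[OF G(1,2) q1] G(3) q by simp
  moreover have "lex_le (alpha M q) (lift M 0 (\<lambda>_. 1))"
    using alpha_le_iff[OF q1 T(1,2)] T(3) q by simp
  ultimately obtain x where x: "x \<in> Omega 1" "x 0 = 1" "alpha M q = lift M 0 x"
    using Vseq_between_lifts_is_lift[OF M V] by blast
  then have "x \<in> Vstar"
    using lift_Vseq_iff[OF M x(1,2)] V by (simp add: Vstar_def)
  moreover have "q = base M (lift M 0 x)"
    using base_alpha[OF q1] x(3) by simp
  ultimately show ?thesis
    by blast
qed

lemma base_lift_dom:
  assumes M: "M \<ge> 1" and x: "x \<in> Vstar"
  shows "base M (lift M 0 x) \<in> {qG M<..qT M} \<inter> Vset M"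
proof -
  note G = alpha_qG[OF M] and T = alpha_qT[OF M] and Q = base_lift_Vstar[OF M x]
  have x': "x \<in> Omega 1" "x 0 = 1"
    using x by (simp_all add: Vstar_def)
  have "lex_less (lift M 0 (\<lambda>_. 0)) (lift M 0 x)"
    using lift_less_iff[OF _ x'(1) _ M, of "\<lambda>_. 0" 0] x'(2) by (simp add: Omega_def lex_less_hd)
  then have "qG M < base M (lift M 0 x)"
    using alpha_less_iff[OF G(1,2) Q(1,2)] G(3) Q(3) by simp
  moreover have "lex_le (lift M 0 x) (lift M 0 (\<lambda>_. 1))"
    using lift_le_iff[OF x'(1) _ _ M, of "\<lambda>_. 1" 0] Omega_1_lex_le_ones[OF x'(1)] by (simp add: Omega_def)
  then have "base M (lift M 0 x) \<le> qT M"
    using alpha_le_iff[OF Q(1,2) T(1,2)] T(3) Q(3) by simp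
  ultimately show ?thesis
    using Q by (simp add: Vset_def)
qed

lemma dom_eq_image_lift:
  assumes M: "M \<ge> 1"
  shows "{qG M<..qT M} \<inter> Vset M = (\<lambda>x. base M (lift M 0 x)) ` Vstar"
  using dom_imp_base_lift[OF M] base_lift_dom[OF M] by blast

lemma Phi_hat_base_lift:
  assumes "M \<ge> 1" "x \<in> Vstar"
  shows "Phi_hat M (base M (lift M 0 x)) = base 1 x"
  using Phi_hat_lift[OF assms(1) _ _ base_lift_Vstar(3)[OF assms]] assms(2) by (simp add: Vstar_def)

lemma Phi_hat_strict_mono:
  assumes M: "M \<ge> 1"
  shows "strict_mono_on ({qG M<..qT M} \<inter> Vset M) (Phi_hat M)"
  unfolding dom_eq_image_lift[OF M]
proof (rule strict_mono_onI)
  fix r s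
  assume "r \<in> (\<lambda>x. base M (lift M 0 x)) ` Vstar" "s \<in> (\<lambda>x. base M (lift M 0 x)) ` Vstar" "r < s"
  then obtain x y where "x \<in> Vstar" "y \<in> Vstar" "r = base M (lift M 0 x)" "s = base M (lift M 0 y)"
    and "base M (lift M 0 x) < base M (lift M 0 y)"
    by blast
  then show "Phi_hat M r < Phi_hat M s"
    using base_lift_less_iff[OF M] base_1_less_iff Phi_hat_base_lift[OF M] by simp
qed

lemma Phi_hat_image:
  assumes M: "M \<ge> 1"
  shows "Phi_hat M ` ({qG M<..qT M} \<inter> Vset M) = Vset 1"
  unfolding dom_eq_image_lift[OF M] Vset_1_eq image_image
  using Phi_hat_base_lift[OF M] by (intro image_cong) auto

lemma image_Ioc_Int_strict_mono:
  fixes f :: "'a::linorder \<Rightarrow> 'b::linorder"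
  assumes "strict_mono_on S f" "a \<in> S" "b \<in> S"
  shows "f ` ({a<..b} \<inter> S) = {f a<..f b} \<inter> f ` S"
  using strict_mono_on_less[OF assms(1)] strict_mono_on_less_eq[OF assms(1)] assms(2,3)
  by auto

theorem lemma3p1:
  fixes M :: nat
  assumes "M \<ge> 1"
  shows "strict_mono_on ({qG M<..qT M} \<inter> Vset M) (Phi_hat M)
       \<and> bij_betw (Phi_hat M) ({qG M<..qT M} \<inter> Vset M) (Vset 1)
       \<and> Phi_hat M (qKL M) = qKL 1
       \<and> (\<forall>n. Phi_hat M ` (Iint M (Suc n) \<inter> Vset M) = Iint 1 n \<inter> Vset 1)"
proof -
  let ?S = "{qG M<..qT M} \<inter> Vset M"
  have mono: "strict_mono_on ?S (Phi_hat M)"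
    using Phi_hat_strict_mono[OF assms] .
  have image: "Phi_hat M ` ?S = Vset 1"
    using Phi_hat_image[OF assms] .
  have qprime: "qprime M (Suc n) \<in> ?S" "Phi_hat M (qprime M (Suc n)) = qprime 1 n" for n
    unfolding dom_eq_image_lift[OF assms] qprime_Suc_eq[OF assms] qprime_1_eq
    using tm_approx_Vstar Phi_hat_base_lift[OF assms] by simp_all
  have "Iint M (Suc n) \<inter> Vset M = {qprime M (Suc (Suc n))<..qprime M (Suc n)} \<inter> ?S" for n
    using qprime[of n] qprime[of "Suc n"] by (auto simp: Iint_def)
  then have "Phi_hat M ` (Iint M (Suc n) \<inter> Vset M) = Iint 1 n \<inter> Vset 1" for n
    using image_Ioc_Int_strict_mono[OF mono qprime(1) qprime(1)] image qprime(2) by (simp add: Iint_def)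
  moreover have "Phi_hat M (qKL M) = qKL 1"
    unfolding qKL_eq[OF assms] qKL_1_eq by (rule Phi_hat_base_lift[OF assms tm_tail_Vstar])
  ultimately show ?thesis
    using mono image strict_mono_on_imp_inj_on[OF mono] by (simp add: bij_betw_def)
qed

end
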